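(* For any two predicates $P,Q$ and any concrete program $S$, if $\models_{\mathrm{tot}}\{P\}\,S\,\{Q\}$, then $\{P\}\,\square\,\{Q\}\hookrightarrow_{\mathrm{tot}}^{*}S$.
   Context: Quantum setting. There is a finite set $\mathrm{qVars}$ of quantum variables; each $q$ has Hilbert space $\mathcal H_q=\mathbb C^{\Sigma_q}$ ($\Sigma_q$ finite) with standard orthonormal basis $\{|x\rangle\}_{x\in\Sigma_q}$. For a set $\vec q\subseteq\mathrm{qVars}$, $\mathcal H_{\vec q}=\bigotimes_{q\in\vec q}\mathcal H_q$ with standard basis labelled by $\Sigma_{\vec q}=\prod_{q\in\vec q}\Sigma_q$, and $\mathcal H=\mathcal H_{\mathrm{qVars}}$. For an operator $A$ on $\mathcal H_{\vec q}$, $A_{\vec q}=A\otimes I$ on $\mathcal H$. $\preceq$ is the Löwner order. A partial state is a positive semidefinite (PSD) $\rho$ on $\mathcal H$ with $\operatorname{tr}\rho\le1$. A predicate is an operator $P$ on $\mathcal H$ with $0\preceq P\preceq I$; "$P\Rightarrow Q$" means $P\preceq Q$. A measurement on $\vec q$ is a family $\vec M=\{M_\omega\}_{\omega\in\Omega}$ ($\Omega$ finite) of PSD operators on $\mathcal H_{\vec q}$ with $\sum_\omega M_\omega=I$; write $\mathcal M_{\omega}(X)=\sqrt{M_{\omega,\vec q}}\,X\,\sqrt{M_{\omega,\vec q}}$. A binary measurement is given by an operator $B$ on $\mathcal H_{\vec q}$ with $0\preceq B\preceq I$, and $\mathcal B_{0,\vec q}(X)=\sqrt{(I-B)_{\vec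 q}}\,X\sqrt{(I-B)_{\vec q}}$, $\mathcal B_{1,\vec q}(X)=\sqrt{B_{\vec q}}\,X\sqrt{B_{\vec q}}$. Quantum while language: $S::=\mathbf{skip}\mid \vec q:=|0\rangle\mid \vec q\mathrel{*}=U\mid S_1;S_2\mid \mathbf{repeat}\ N\ \mathbf{do}\ S\mid \mathbf{case}\ \vec M[\vec q]\ \mathbf{of}\ \{\omega: S_\omega\}_{\omega\in\Omega}\mid \mathbf{while}\ B[\vec q]\ \mathbf{do}\ S$, with $U$ unitary on $\mathcal H_{\vec q}$, $N\in\mathbb N$. Denotational semantics $[\![S]\!]$ on partial states: $[\![\mathbf{skip}]\!](\rho)=\rho$; $[\![\vec q:=|0\rangle]\!](\rho)=\sum_{x\in\Sigma_{\vec q}}|0\rangle\langle x|_{\vec q}\,\rho\,|x\rangle\langle0|_{\vec q}$; $[\![\vec q\mathrel{*}=U]\!](\rho)=U_{\vec q}\rho U_{\vec q}^\dagger$; $[\![S_1;S_2]\!]=[\![S_2]\!]\circ[\![S_1]\!]$; $[\![\mathbf{repeat}\ N\ \mathbf{do}\ S]\!]=[\![S]\!]^N$; $[\![\mathbf{case}\ldots]\!](\rho)=\sum_\omega[\![S_\omega]\!](\mathcal M_\omega(\rho))$; $[\![\mathbf{while}\ B[\vec q]\ \mathbf{do}\ S]\!](\rho)=\sum_{k\ge0}(\mathcal B_{0,\vec q}\circ([\![S]\!]\circ\mathcal B_{1,\vec q})^k)(\rho)$. Hoare triples: $\models_{\mathrm{tot}}\{P\}S\{Q\}$ iff $\operatorname{tr}(P\rho)\le\operatorname{tr}(Q[\![S]\!](\rho))$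 for all partial states $\rho$; $\models_{\mathrm{par}}\{P\}S\{Q\}$ iff $\operatorname{tr}(P\rho)\le\operatorname{tr}(Q[\![S]\!](\rho))+\operatorname{tr}\rho-\operatorname{tr}[\![S]\!](\rho)$ for all partial states $\rho$. Syntactic sugar: $\mathbf{if}\ B[\vec q]\ \mathbf{then}\ S_1\ \mathbf{else}\ S_0$ abbreviates $\mathbf{case}\ \{1:B,0:I-B\}[\vec q]\ \mathbf{of}\ \{1:S_1,0:S_0\}$; omitting else means $S_0=\mathbf{skip}$. Programs with holes. The grammar is extended by holes $\{P\}\,\square\,\{Q\}$ ($P,Q$ predicates); more generally a hole may carry a family of specifications $\{P_\lambda\}\,\square\,\{Q_\lambda\}$, $\lambda\in\Lambda$ (written e.g. $\{P,P'\}\square\{Q,Q'\}$ for two). A program without holes is concrete. A refinement rule applied to a hole with a family must have its side conditions satisfied for every $\lambda$; the predicates it introduces may depend on $\lambda$, but the syntactic program produced (variables, unitaries, measurements, $N$, $B$) is the same for all $\lambda$; holes it creates carry the families indexed by $\lambda$ together with any newly introduced index. Refinement for partial correctness $\hookrightarrow_{\mathrm{par}}$ (for predicates $P,Q$): (H.skip) $\{P\}\square\{Q\}\hookrightarrow\mathbf{skip}$ if $P\Rightarrow Q$; (H.init) $\{P\}\square\{Q\}\hookrightarrow\vec q:=|0\rangle$ if $P\Rightarrow\sum_{x\in\Sigma_{\vec q}}|x\rangle\langle0|_{\vec q}Q|0\rangle\langle x|_{\vec q}$; (H.unit) $\{P\}\square\{Q\}\hookrightarrow\vec q\mathrel{*}=U$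 if $P\Rightarrow U_{\vec q}^\dagger QU_{\vec q}$; (H.seq) $\{P\}\square\{Q\}\hookrightarrow\{P\}\square\{R\};\{R\}\square\{Q\}$ for any predicate $R$; (HP.split) $\{P\}\square\{Q\}\hookrightarrow\{P_\gamma\}\square\{Q_\gamma\}$ ($\gamma\in\Gamma$) if $P\Rightarrow\sum_\gamma p_\gamma P_\gamma$ and $\sum_\gamma p_\gamma Q_\gamma\Rightarrow Q$ for a probability distribution $(p_\gamma)$; (H.repeat) $\{P\}\square\{Q\}\hookrightarrow\mathbf{repeat}\ N\ \mathbf{do}\ \{R_j\}\square\{R_{j+1}\}$ (family over $j\in\{0,\dots,N-1\}$) for predicates $R_0,\dots,R_N$ with $P\Rightarrow R_0$, $R_N\Rightarrow Q$; (H.case) $\{P\}\square\{Q\}\hookrightarrow\mathbf{case}\ \vec M[\vec q]\ \mathbf{of}\ \{\omega:\{P_\omega\}\square\{Q\}\}_{\omega}$ if $P\Rightarrow\sum_\omega\mathcal M_\omega(P_\omega)$; (HP.while) $\{P\}\square\{Q\}\hookrightarrow\mathbf{while}\ B[\vec q]\ \mathbf{do}\ \{R\}\square\{\mathcal B_{0,\vec q}(Q)+\mathcal B_{1,\vec q}(R)\}$ for a predicate $R$ with $P\Rightarrow\mathcal B_{0,\vec q}(Q)+\mathcal B_{1,\vec q}(R)$. Composite rules: (C.seqL/C.seqR/C.repeat/C.case/C.while) if $S'\hookrightarrow S$ then replacing one occurrence of $S'$ as the left or right component of a sequence, the body of a repeat, one branch of a case, or the body of a while by $S$ is a refinement step.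 Refinement for total correctness $\hookrightarrow_{\mathrm{tot}}$ uses all (H.* ) and (C.* ) rules above but replaces (HP.while) by (HT.while): $\{P\}\square\{Q\}\hookrightarrow\mathbf{while}\ B[\vec q]\ \mathbf{do}\ \{R_{n+1}\}\square\{\mathcal B_{0,\vec q}(Q)+\mathcal B_{1,\vec q}(R_n)\}$ (family over $n\in\mathbb N$) for predicates $(R_n)_{n\in\mathbb N}$ with $R_0=0$, $R_n\Rightarrow R_{n+1}$, whose limit $R=\lim_n R_n$ satisfies $P\Rightarrow\mathcal B_{0,\vec q}(Q)+\mathcal B_{1,\vec q}(R)$; and replaces (HP.split) by (HT.split), identical except that $(p_\gamma)$ need only be nonnegative reals. $\hookrightarrow^k$ denotes $k$ steps and $\hookrightarrow^*$ the reflexive-transitive closure. *)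

theory Defs
  imports Complex_Main
begin

text \<open>The set qVars of quantum variables is the finite type 'v (qVars = UNIV).
  Each variable q has a finite set of classical values Sg q (a subset of the finite type 'a),
  containing the value 0 (used for the basis state |0>).
  A basis vector of H_qs (qs a set of variables) is represented by a memory m :: 'v => 'a with
  m q in Sg q for q in qs and m q = 0 for q not in qs.  Operators are matrices indexed by memories;
  only entries indexed by basis memories are meaningful.\<close>

type_synonym ('v,'a) op = "('v \<Rightarrow> 'a) \<Rightarrow> ('v \<Rightarrow> 'a) \<Rightarrow> complex"

definition basis :: "('v \<Rightarrow> 'a set) \<Rightarrow> 'v set \<Rightarrow> ('v \<Rightarrow> 'a::zero) set" where
  "basis Sg qs = {m. \<forall>q. (q \<in> qs \<longrightarrow> m q \<in> Sg q) \<and> (q \<notin> qs \<longrightarrow> m q = 0)}"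

definition opmult :: "('v \<Rightarrow> 'a set) \<Rightarrow> 'v set \<Rightarrow> ('v,'a::zero) op \<Rightarrow> ('v,'a) op \<Rightarrow> ('v,'a) op" where
  "opmult Sg qs A B = (\<lambda>x y. \<Sum>z\<in>basis Sg qs. A x z * B z y)"

definition adj :: "('v,'a) op \<Rightarrow> ('v,'a) op" where
  "adj A = (\<lambda>x y. cnj (A y x))"

definition opId :: "('v,'a) op" where
  "opId = (\<lambda>x y. if x = y then 1 else 0)"

definition opzero :: "('v,'a) op" where
  "opzero = (\<lambda>x y. 0)"

definition opdiff :: "('v,'a) op \<Rightarrow> ('v,'a) op \<Rightarrow> ('v,'a) op" where
  "opdiff A B = (\<lambda>x y. A x y - B x y)"

definition opadd :: "('v,'a) op \<Rightarrow> ('v,'a) op \<Rightarrow> ('v,'a) op" where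
  "opadd A B = (\<lambda>x y. A x y + B x y)"

definition psd :: "('v \<Rightarrow> 'a set) \<Rightarrow> 'v set \<Rightarrow> ('v,'a::zero) op \<Rightarrow> bool" where
  "psd Sg qs A \<longleftrightarrow> (\<forall>\<psi> :: ('v \<Rightarrow> 'a) \<Rightarrow> complex.
     (let v = (\<Sum>x\<in>basis Sg qs. \<Sum>y\<in>basis Sg qs. cnj (\<psi> x) * A x y * \<psi> y)
      in Im v = 0 \<and> 0 \<le> Re v))"

definition loewner :: "('v \<Rightarrow> 'a set) \<Rightarrow> 'v set \<Rightarrow> ('v,'a::zero) op \<Rightarrow> ('v,'a) op \<Rightarrow> bool" where
  "loewner Sg qs A B \<longleftrightarrow> psd Sg qs (opdiff B A)"

definition is_pred :: "('v \<Rightarrow> 'a set) \<Rightarrow> ('v,'a::zero) op \<Rightarrow> bool" where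
  "is_pred Sg P \<longleftrightarrow> loewner Sg UNIV opzero P \<and> loewner Sg UNIV P opId"

definition supported :: "('v \<Rightarrow> 'a set) \<Rightarrow> 'v set \<Rightarrow> ('v,'a::zero) op \<Rightarrow> bool" where
  "supported Sg qs A \<longleftrightarrow> (\<forall>x y. x \<notin> basis Sg qs \<or> y \<notin> basis Sg qs \<longrightarrow> A x y = 0)"

definition opsqrt :: "('v \<Rightarrow> 'a set) \<Rightarrow> 'v set \<Rightarrow> ('v,'a::zero) op \<Rightarrow> ('v,'a) op" where
  "opsqrt Sg qs A = (THE S. supported Sg qs S \<and> psd Sg qs S \<and>
      (\<forall>x\<in>basis Sg qs. \<forall>y\<in>basis Sg qs. opmult Sg qs S S x y = A x y))"

definition restr :: "'v set \<Rightarrow> ('v \<Rightarrow> 'a::zero) \<Rightarrow> ('v \<Rightarrow> 'a)" where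
  "restr qs m = (\<lambda>q. if q \<in> qs then m q else 0)"

text \<open>A_qs = A \<otimes> I on H.\<close>
definition lift :: "'v set \<Rightarrow> ('v,'a::zero) op \<Rightarrow> ('v,'a) op" where
  "lift qs A = (\<lambda>x y. if (\<forall>q. q \<notin> qs \<longrightarrow> x q = y q) then A (restr qs x) (restr qs y) else 0)"

definition sandwich :: "('v \<Rightarrow> 'a set) \<Rightarrow> ('v,'a::zero) op \<Rightarrow> ('v,'a) op \<Rightarrow> ('v,'a) op" where
  "sandwich Sg K X = opmult Sg UNIV (opmult Sg UNIV K X) (adj K)"

definition trace :: "('v \<Rightarrow> 'a set) \<Rightarrow> ('v,'a::zero) op \<Rightarrow> complex" where
  "trace Sg A = (\<Sum>x\<in>basis Sg UNIV. A x x)"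

definition pstate :: "('v \<Rightarrow> 'a set) \<Rightarrow> ('v,'a::zero) op \<Rightarrow> bool" where
  "pstate Sg \<rho> \<longleftrightarrow> psd Sg UNIV \<rho> \<and> Re (trace Sg \<rho>) \<le> 1"

definition ketbra0 :: "('v \<Rightarrow> 'a::zero) \<Rightarrow> ('v,'a) op" where
  "ketbra0 x = (\<lambda>a b. if a = (\<lambda>q. 0) \<and> b = x then 1 else 0)"

definition meas_map :: "('v \<Rightarrow> 'a set) \<Rightarrow> 'v set \<Rightarrow> ('v,'a::zero) op \<Rightarrow> ('v,'a) op \<Rightarrow> ('v,'a) op" where
  "meas_map Sg qs M = sandwich Sg (lift qs (opsqrt Sg qs M))"

definition unitary :: "('v \<Rightarrow> 'a set) \<Rightarrow> 'v set \<Rightarrow> ('v,'a::zero) op \<Rightarrow> bool" where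
  "unitary Sg qs U \<longleftrightarrow> (\<forall>x\<in>basis Sg qs. \<forall>y\<in>basis Sg qs.
      opmult Sg qs U (adj U) x y = opId x y \<and> opmult Sg qs (adj U) U x y = opId x y)"

text \<open>A measurement on qs, its outcomes Omega being the positions of the (finite) list.\<close>
definition measurement :: "('v \<Rightarrow> 'a set) \<Rightarrow> 'v set \<Rightarrow> ('v,'a::zero) op list \<Rightarrow> bool" where
  "measurement Sg qs Ms \<longleftrightarrow> (\<forall>M\<in>set Ms. psd Sg qs M) \<and>
     (\<forall>x\<in>basis Sg qs. \<forall>y\<in>basis Sg qs. sum_list (map (\<lambda>M. M x y) Ms) = opId x y)"

definition binmeas :: "('v \<Rightarrow> 'a set) \<Rightarrow> 'v set \<Rightarrow> ('v,'a::zero) op \<Rightarrow> bool" where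
  "binmeas Sg qs B \<longleftrightarrow> loewner Sg qs opzero B \<and> loewner Sg qs B opId"

text \<open>A hole carries a family of specifications indexed by nat lists
  (a partial map; the index set Lambda is its domain).\<close>
type_synonym ('v,'a) fam = "nat list \<Rightarrow> (('v,'a) op \<times> ('v,'a) op) option"

datatype ('v,'a) prog =
    Skip
  | Init "'v set"
  | Unit "'v set" "('v,'a) op"
  | Seq "('v,'a) prog" "('v,'a) prog"
  | Repeat nat "('v,'a) prog"
  | Case "'v set" "(('v,'a) op \<times> ('v,'a) prog) list"
  | While "'v set" "('v,'a) op" "('v,'a) prog"
  | Hole "('v,'a) fam"

fun concrete :: "('v,'a) prog \<Rightarrow> bool" where
  "concrete Skip = True"
| "concrete (Init qs) = True"
| "concrete (Unit qs U) = True"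
| "concrete (Seq S1 S2) = (concrete S1 \<and> concrete S2)"
| "concrete (Repeat N S) = concrete S"
| "concrete (Case qs bs) = (\<forall>b\<in>set bs. concrete (snd b))"
| "concrete (While qs B S) = concrete S"
| "concrete (Hole F) = False"

fun wf_prog :: "('v \<Rightarrow> 'a set) \<Rightarrow> ('v,'a::zero) prog \<Rightarrow> bool" where
  "wf_prog Sg Skip = True"
| "wf_prog Sg (Init qs) = True"
| "wf_prog Sg (Unit qs U) = unitary Sg qs U"
| "wf_prog Sg (Seq S1 S2) = (wf_prog Sg S1 \<and> wf_prog Sg S2)"
| "wf_prog Sg (Repeat N S) = wf_prog Sg S"
| "wf_prog Sg (Case qs bs) = (measurement Sg qs (map fst bs) \<and> (\<forall>b\<in>set bs. wf_prog Sg (snd b)))"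
| "wf_prog Sg (While qs B S) = (binmeas Sg qs B \<and> wf_prog Sg S)"
| "wf_prog Sg (Hole F) = True"

fun denot :: "('v \<Rightarrow> 'a set) \<Rightarrow> ('v,'a::zero) prog \<Rightarrow> ('v,'a) op \<Rightarrow> ('v,'a) op" where
  "denot Sg Skip = (\<lambda>\<rho>. \<rho>)"
| "denot Sg (Init qs) = (\<lambda>\<rho> a b. \<Sum>x\<in>basis Sg qs. sandwich Sg (lift qs (ketbra0 x)) \<rho> a b)"
| "denot Sg (Unit qs U) = sandwich Sg (lift qs U)"
| "denot Sg (Seq S1 S2) = denot Sg S2 \<circ> denot Sg S1"
| "denot Sg (Repeat N S) = denot Sg S ^^ N"
| "denot Sg (Case qs bs) =
     (\<lambda>\<rho> a b. sum_list (map (\<lambda>b'. denot Sg (snd b') (meas_map Sg qs (fst b') \<rho>) a b) bs))"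
| "denot Sg (While qs B S) =
     (\<lambda>\<rho> a b. \<Sum>k. meas_map Sg qs (opdiff opId B)
                     (((denot Sg S \<circ> meas_map Sg qs B) ^^ k) \<rho>) a b)"
| "denot Sg (Hole F) = (\<lambda>\<rho>. opzero)"

definition hoare_tot :: "('v \<Rightarrow> 'a set) \<Rightarrow> ('v,'a::zero) op \<Rightarrow> ('v,'a) prog \<Rightarrow> ('v,'a) op \<Rightarrow> bool" where
  "hoare_tot Sg P S Q \<longleftrightarrow> (\<forall>\<rho>. pstate Sg \<rho> \<longrightarrow>
     Re (trace Sg (opmult Sg UNIV P \<rho>)) \<le> Re (trace Sg (opmult Sg UNIV Q (denot Sg S \<rho>))))"

text \<open>New family indexed by l @ [j] for l in the old index set and j in J.\<close>
definition extend :: "('v,'a) fam \<Rightarrow> nat set \<Rightarrow>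
    (nat list \<Rightarrow> nat \<Rightarrow> ('v,'a) op \<times> ('v,'a) op \<Rightarrow> ('v,'a) op \<times> ('v,'a) op) \<Rightarrow> ('v,'a) fam" where
  "extend F J f = (\<lambda>l. if l \<noteq> [] \<and> last l \<in> J
                       then map_option (f (butlast l) (last l)) (F (butlast l)) else None)"

inductive refines_tot :: "('v \<Rightarrow> 'a set) \<Rightarrow> ('v,'a::zero) prog \<Rightarrow> ('v,'a) prog \<Rightarrow> bool"
  for Sg :: "'v \<Rightarrow> 'a set" where
  H_skip: "(\<forall>l P Q. F l = Some (P,Q) \<longrightarrow> loewner Sg UNIV P Q)
     \<Longrightarrow> refines_tot Sg (Hole F) Skip"
| H_init: "(\<forall>l P Q. F l = Some (P,Q) \<longrightarrow> loewner Sg UNIV P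
              (\<lambda>a b. \<Sum>x\<in>basis Sg qs. sandwich Sg (adj (lift qs (ketbra0 x))) Q a b))
     \<Longrightarrow> refines_tot Sg (Hole F) (Init qs)"
| H_unit: "unitary Sg qs U \<Longrightarrow>
     (\<forall>l P Q. F l = Some (P,Q) \<longrightarrow> loewner Sg UNIV P (sandwich Sg (adj (lift qs U)) Q))
     \<Longrightarrow> refines_tot Sg (Hole F) (Unit qs U)"
| H_seq: "(\<forall>l. l \<in> dom F \<longrightarrow> is_pred Sg (R l))
     \<Longrightarrow> refines_tot Sg (Hole F)
          (Seq (Hole (\<lambda>l. map_option (\<lambda>(P,Q). (P, R l)) (F l)))
               (Hole (\<lambda>l. map_option (\<lambda>(P,Q). (R l, Q)) (F l))))"
| HT_split: "finite \<Gamma> \<Longrightarrow>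
     (\<forall>l. l \<in> dom F \<longrightarrow> (\<forall>g\<in>\<Gamma>. 0 \<le> p l g \<and> is_pred Sg (Pg l g) \<and> is_pred Sg (Qg l g))) \<Longrightarrow>
     (\<forall>l P Q. F l = Some (P,Q) \<longrightarrow>
        loewner Sg UNIV P (\<lambda>a b. \<Sum>g\<in>\<Gamma>. complex_of_real (p l g) * Pg l g a b) \<and>
        loewner Sg UNIV (\<lambda>a b. \<Sum>g\<in>\<Gamma>. complex_of_real (p l g) * Qg l g a b) Q)
     \<Longrightarrow> refines_tot Sg (Hole F) (Hole (extend F \<Gamma> (\<lambda>l g _. (Pg l g, Qg l g))))"
| H_repeat: "(\<forall>l. l \<in> dom F \<longrightarrow> (\<forall>j\<le>N. is_pred Sg (R l j))) \<Longrightarrow>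
     (\<forall>l P Q. F l = Some (P,Q) \<longrightarrow> loewner Sg UNIV P (R l 0) \<and> loewner Sg UNIV (R l N) Q)
     \<Longrightarrow> refines_tot Sg (Hole F)
          (Repeat N (Hole (extend F {0..<N} (\<lambda>l j _. (R l j, R l (Suc j))))))"
| H_case: "measurement Sg qs Ms \<Longrightarrow>
     (\<forall>l. l \<in> dom F \<longrightarrow> (\<forall>w<length Ms. is_pred Sg (Pw l w))) \<Longrightarrow>
     (\<forall>l P Q. F l = Some (P,Q) \<longrightarrow> loewner Sg UNIV P
         (\<lambda>a b. \<Sum>w<length Ms. meas_map Sg qs (Ms ! w) (Pw l w) a b))
     \<Longrightarrow> refines_tot Sg (Hole F)
          (Case qs (map (\<lambda>w. (Ms ! w, Hole (\<lambda>l. map_option (\<lambda>(P,Q). (Pw l w, Q)) (F l))))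
                        [0..<length Ms]))"
| HT_while: "binmeas Sg qs B \<Longrightarrow>
     (\<forall>l. l \<in> dom F \<longrightarrow> (\<forall>n. is_pred Sg (R l n)) \<and> R l 0 = opzero \<and>
          (\<forall>n. loewner Sg UNIV (R l n) (R l (Suc n)))) \<Longrightarrow>
     (\<forall>l P Q. F l = Some (P,Q) \<longrightarrow> (\<exists>Rlim.
          (\<forall>x\<in>basis Sg UNIV. \<forall>y\<in>basis Sg UNIV. (\<lambda>n. R l n x y) \<longlonglongrightarrow> Rlim x y) \<and>
          loewner Sg UNIV P (opadd (meas_map Sg qs (opdiff opId B) Q) (meas_map Sg qs B Rlim))))
     \<Longrightarrow> refines_tot Sg (Hole F)
          (While qs B (Hole (extend F UNIV (\<lambda>l n (P,Q).
              (R l (Suc n), opadd (meas_map Sg qs (opdiff opId B) Q) (meas_map Sg qs B (R l n)))))))"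
| C_seqL: "refines_tot Sg S S' \<Longrightarrow> refines_tot Sg (Seq S T) (Seq S' T)"
| C_seqR: "refines_tot Sg T T' \<Longrightarrow> refines_tot Sg (Seq S T) (Seq S T')"
| C_repeat: "refines_tot Sg S S' \<Longrightarrow> refines_tot Sg (Repeat N S) (Repeat N S')"
| C_case: "i < length bs \<Longrightarrow> refines_tot Sg (snd (bs ! i)) S' \<Longrightarrow>
     refines_tot Sg (Case qs bs) (Case qs (bs[i := (fst (bs ! i), S')]))"
| C_while: "refines_tot Sg S S' \<Longrightarrow> refines_tot Sg (While qs B S) (While qs B S')"

end

(* Completeness is witnessed by weakest preconditions. Define wp S Q by structural recursion (the
   dual of the denotational semantics; for a loop, the limit of the increasing iterates
   R(n+1) = wp S (B0 Q + B1 (R n)) from R 0 = 0) and show by induction on S that wp maps predicates to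
   predicates and satisfies tr (Q [[S]](rho)) = tr (wp S Q rho). Testing with rank-one partial states then
   turns the Hoare triple into P <= wp S Q. A second induction on S refines the hole, choosing every
   intermediate predicate as the weakest precondition of the remaining program; for a loop the iterates
   R n are exactly the sequence demanded by HT.while.
   The measurement maps involve square roots of effects 0 <= M <= I. They are obtained as I - Y, where Y
   is the limit of the increasing iteration Y(k+1) = (C + Y k Y k)/2 with C = I - M. *)

theory Submission
  imports Defs
begin

section \<open>Positive operators\<close>

definition quadform :: "('v \<Rightarrow> 'a set) \<Rightarrow> 'v set \<Rightarrow> ('v,'a::zero) op \<Rightarrow> (('v \<Rightarrow> 'a) \<Rightarrow> complex) \<Rightarrow> complex" where
  "quadform Sg qs A \<psi> = (\<Sum>x\<in>basis Sg qs. \<Sum>y\<in>basis Sg qs. cnj (\<psi> x) * A x y * \<psi> y)"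

definition sesqform :: "('v \<Rightarrow> 'a set) \<Rightarrow> 'v set \<Rightarrow> ('v,'a::zero) op \<Rightarrow> (('v \<Rightarrow> 'a) \<Rightarrow> complex) \<Rightarrow> (('v \<Rightarrow> 'a) \<Rightarrow> complex) \<Rightarrow> complex" where
  "sesqform Sg qs A \<phi> \<psi> = (\<Sum>x\<in>basis Sg qs. \<Sum>y\<in>basis Sg qs. cnj (\<phi> x) * A x y * \<psi> y)"

definition eq_on :: "('v \<Rightarrow> 'a set) \<Rightarrow> 'v set \<Rightarrow> ('v,'a::zero) op \<Rightarrow> ('v,'a) op \<Rightarrow> bool" where
  "eq_on Sg qs A B \<longleftrightarrow> (\<forall>x\<in>basis Sg qs. \<forall>y\<in>basis Sg qs. A x y = B x y)"

definition tr :: "('v \<Rightarrow> 'a set) \<Rightarrow> 'v set \<Rightarrow> ('v,'a::zero) op \<Rightarrow> complex" where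
  "tr Sg qs A = (\<Sum>x\<in>basis Sg qs. A x x)"

definition opscale :: "complex \<Rightarrow> ('v,'a) op \<Rightarrow> ('v,'a) op" where
  "opscale c A = (\<lambda>x y. c * A x y)"

definition cut_op :: "('v \<Rightarrow> 'a set) \<Rightarrow> 'v set \<Rightarrow> ('v,'a::zero) op \<Rightarrow> ('v,'a) op" where
  "cut_op Sg qs A = (\<lambda>x y. if x \<in> basis Sg qs \<and> y \<in> basis Sg qs then A x y else 0)"

\<comment> \<open>opId is 1 on the whole diagonal, also outside basis Sg qs; opId_on is the unit of the algebra
  of operators supported on basis Sg qs.\<close>
abbreviation opId_on :: "('v \<Rightarrow> 'a set) \<Rightarrow> 'v set \<Rightarrow> ('v,'a::zero) op" where
  "opId_on Sg qs \<equiv> cut_op Sg qs opId"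

context fixes Sg :: "'v::finite \<Rightarrow> 'a::{finite,zero} set" begin

lemma finite_basis[simp]: "finite (basis Sg qs)"
  by (rule finite_subset[OF subset_UNIV]) simp

lemma psd_quadform: "psd Sg qs A \<longleftrightarrow> (\<forall>\<psi>. Im (quadform Sg qs A \<psi>) = 0 \<and> 0 \<le> Re (quadform Sg qs A \<psi>))"
  unfolding psd_def quadform_def Let_def by simp

lemma quadform_add: "quadform Sg qs (opadd A B) \<psi> = quadform Sg qs A \<psi> + quadform Sg qs B \<psi>"
  unfolding quadform_def opadd_def by (simp add: algebra_simps sum.distrib)

lemma quadform_diff: "quadform Sg qs (opdiff A B) \<psi> = quadform Sg qs A \<psi> - quadform Sg qs B \<psi>"
  unfolding quadform_def opdiff_def by (simp add: algebra_simps sum_subtractf)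

lemma quadform_opscale: "quadform Sg qs (opscale c A) \<psi> = c * quadform Sg qs A \<psi>"
  unfolding quadform_def opscale_def by (simp add: algebra_simps sum_distrib_left)

lemma quadform_zero[simp]: "quadform Sg qs opzero \<psi> = 0"
  unfolding quadform_def opzero_def by simp

lemma quadform_cong: "eq_on Sg qs A B \<Longrightarrow> quadform Sg qs A \<psi> = quadform Sg qs B \<psi>"
  unfolding quadform_def eq_on_def by (intro sum.cong refl) auto

lemma psd_cong: "eq_on Sg qs A B \<Longrightarrow> psd Sg qs A = psd Sg qs B"
  unfolding psd_quadform using quadform_cong by metis

lemma eq_on_refl[simp]: "eq_on Sg qs A A" unfolding eq_on_def by auto
lemma eq_on_sym: "eq_on Sg qs A B \<Longrightarrow> eq_on Sg qs B A" unfolding eq_on_def by auto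
lemma eq_on_trans: "eq_on Sg qs A B \<Longrightarrow> eq_on Sg qs B C \<Longrightarrow> eq_on Sg qs A C" unfolding eq_on_def by auto

lemma psd_add: "psd Sg qs A \<Longrightarrow> psd Sg qs B \<Longrightarrow> psd Sg qs (opadd A B)"
  unfolding psd_quadform quadform_add by simp

lemma psd_zero[simp]: "psd Sg qs opzero"
  unfolding psd_quadform by simp

lemma psd_opscale: "psd Sg qs A \<Longrightarrow> 0 \<le> c \<Longrightarrow> psd Sg qs (opscale (complex_of_real c) A)"
  unfolding psd_quadform quadform_opscale by simp

lemma loewner_refl[simp]: "loewner Sg qs A A"
  unfolding loewner_def psd_quadform quadform_diff by simp

lemma loewner_quadform: "loewner Sg qs A B \<longleftrightarrow> (\<forall>\<psi>. Im (quadform Sg qs A \<psi>) = Im (quadform Sg qs B \<psi>) \<and> Re (quadform Sg qs A \<psi>) \<le> Re (quadform Sg qs B \<psi>))"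
  unfolding loewner_def psd_quadform quadform_diff by auto

lemma psd_loewner: "psd Sg qs A \<longleftrightarrow> loewner Sg qs opzero A"
  unfolding loewner_quadform psd_quadform by auto

lemma opadd_zero_left[simp]: "opadd opzero A = A" unfolding opadd_def opzero_def by simp

lemma opadd_zero_right[simp]: "opadd A opzero = A" unfolding opadd_def opzero_def by simp
lemma opdiff_zero_right[simp]: "opdiff A opzero = A" unfolding opdiff_def opzero_def by simp
lemma opadd_assoc: "opadd (opadd A B) D = opadd A (opadd B D)" unfolding opadd_def by (simp add: add.assoc)

lemma opscale_opadd: "opscale c (opadd A B) = opadd (opscale c A) (opscale c B)"
  unfolding opscale_def opadd_def by (simp add: algebra_simps)
lemma opscale_opscale: "opscale c (opscale d A) = opscale (c * d) A"
  unfolding opscale_def by (simp add: algebra_simps)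
lemma opscale_zero[simp]: "opscale c opzero = opzero"
  unfolding opscale_def opzero_def by simp

lemma opmult_assoc: "opmult Sg qs (opmult Sg qs A B) C = opmult Sg qs A (opmult Sg qs B C)"
proof (intro ext)
  fix x y
  show "opmult Sg qs (opmult Sg qs A B) C x y = opmult Sg qs A (opmult Sg qs B C) x y"
    unfolding opmult_def sum_distrib_left sum_distrib_right
    by (subst sum.swap) (simp add: mult.assoc)
qed

lemma opmult_add_left: "opmult Sg qs (opadd A B) C = opadd (opmult Sg qs A C) (opmult Sg qs B C)"
  unfolding opmult_def opadd_def by (auto simp: algebra_simps sum.distrib intro!: ext)
lemma opmult_add_right: "opmult Sg qs C (opadd A B) = opadd (opmult Sg qs C A) (opmult Sg qs C B)"
  unfolding opmult_def opadd_def by (auto simp: algebra_simps sum.distrib intro!: ext)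
lemma opmult_diff_left: "opmult Sg qs (opdiff A B) C = opdiff (opmult Sg qs A C) (opmult Sg qs B C)"
  unfolding opmult_def opdiff_def by (auto simp: algebra_simps sum_subtractf intro!: ext)
lemma opmult_diff_right: "opmult Sg qs C (opdiff A B) = opdiff (opmult Sg qs C A) (opmult Sg qs C B)"
  unfolding opmult_def opdiff_def by (auto simp: algebra_simps sum_subtractf intro!: ext)
lemma opmult_opscale_left: "opmult Sg qs (opscale c A) C = opscale c (opmult Sg qs A C)"
  unfolding opmult_def opscale_def by (auto simp: algebra_simps sum_distrib_left intro!: ext)
lemma opmult_opscale_right: "opmult Sg qs C (opscale c A) = opscale c (opmult Sg qs C A)"
  unfolding opmult_def opscale_def by (auto simp: algebra_simps sum_distrib_left intro!: ext)lemma opmult_zero_left[simp]: "opmult Sg qs opzero C = opzero"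
  unfolding opmult_def opzero_def by auto

lemma opmult_zero_right[simp]: "opmult Sg qs C opzero = opzero"
  unfolding opmult_def opzero_def by auto

lemma opmult_cong: "eq_on Sg qs A A' \<Longrightarrow> eq_on Sg qs B B' \<Longrightarrow> eq_on Sg qs (opmult Sg qs A B) (opmult Sg qs A' B')"
  unfolding eq_on_def opmult_def by auto

lemma opId_left: "x \<in> basis Sg qs \<Longrightarrow> opmult Sg qs opId A x y = A x y"
proof -
  assume x: "x \<in> basis Sg qs"
  have "opmult Sg qs opId A x y = (\<Sum>z\<in>basis Sg qs. if x = z then A z y else 0)"
    unfolding opmult_def opId_def by (rule sum.cong) auto
  also have "\<dots> = A x y" using x by (simp add: sum.delta)
  finally show ?thesis .
qed

lemma opId_right: "y \<in> basis Sg qs \<Longrightarrow> opmult Sg qs A opId x y = A x y"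
proof -
  assume y: "y \<in> basis Sg qs"
  have "opmult Sg qs A opId x y = (\<Sum>z\<in>basis Sg qs. if z = y then A x z else 0)"
    unfolding opmult_def opId_def by (rule sum.cong) auto
  also have "\<dots> = A x y" using y by (simp add: sum.delta')
  finally show ?thesis .
qed

lemma eq_on_opId_left: "eq_on Sg qs (opmult Sg qs opId A) A"
  unfolding eq_on_def using opId_left by metis
lemma eq_on_opId_right: "eq_on Sg qs (opmult Sg qs A opId) A"
  unfolding eq_on_def using opId_right by metis

lemma adj_adj[simp]: "adj (adj A) = A" unfolding adj_def by auto
lemma adj_opmult: "adj (opmult Sg qs A B) = opmult Sg qs (adj B) (adj A)"
  unfolding adj_def opmult_def by (auto simp: mult.commute intro!: ext)
lemma adj_opdiff: "adj (opdiff A B) = opdiff (adj A) (adj B)"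
  unfolding adj_def opdiff_def by auto

lemma tr_cyclic: "tr Sg qs (opmult Sg qs A B) = tr Sg qs (opmult Sg qs B A)"
  unfolding tr_def opmult_def by (subst sum.swap) (simp add: mult.commute)

lemma tr_add: "tr Sg qs (opadd A B) = tr Sg qs A + tr Sg qs B"
  unfolding tr_def opadd_def by (simp add: sum.distrib)
lemma tr_diff: "tr Sg qs (opdiff A B) = tr Sg qs A - tr Sg qs B"
  unfolding tr_def opdiff_def by (simp add: sum_subtractf)
lemma tr_opscale: "tr Sg qs (opscale c A) = c * tr Sg qs A"
  unfolding tr_def opscale_def by (simp add: sum_distrib_left)
lemma tr_cong: "eq_on Sg qs A B \<Longrightarrow> tr Sg qs A = tr Sg qs B"
  unfolding tr_def eq_on_def by auto

lemma quadform_sesqform: "quadform Sg qs A \<psi> = sesqform Sg qs A \<psi> \<psi>" unfolding quadform_def sesqform_def ..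

lemma sesqform_add_left: "sesqform Sg qs A (\<lambda>z. \<phi>1 z + \<phi>2 z) \<psi> = sesqform Sg qs A \<phi>1 \<psi> + sesqform Sg qs A \<phi>2 \<psi>"
  unfolding sesqform_def by (simp add: algebra_simps sum.distrib)
lemma sesqform_add_right: "sesqform Sg qs A \<phi> (\<lambda>z. \<psi>1 z + \<psi>2 z) = sesqform Sg qs A \<phi> \<psi>1 + sesqform Sg qs A \<phi> \<psi>2"
  unfolding sesqform_def by (simp add: algebra_simps sum.distrib)

lemma sesqform_delta:
  assumes "a \<in> basis Sg qs" "b \<in> basis Sg qs"
  shows "sesqform Sg qs A (\<lambda>z. if z = a then \<alpha> else 0) (\<lambda>z. if z = b then \<beta> else 0) = cnj \<alpha> * A a b * \<beta>"
proof -
  have "cnj (if x = a then \<alpha> else 0) * A x y * (if y = b then \<beta> else 0) =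
      (if y = b then if x = a then cnj \<alpha> * A a b * \<beta> else 0 else 0)" for x y
    by simp
  then show ?thesis unfolding sesqform_def using assms by (simp add: sum.delta)
qed

lemma quadform_delta: "a \<in> basis Sg qs \<Longrightarrow> quadform Sg qs A (\<lambda>z. if z = a then \<alpha> else 0) = cnj \<alpha> * A a a * \<alpha>"
  by (simp add: quadform_sesqform sesqform_delta)

lemma quadform_delta_pair: "a \<in> basis Sg qs \<Longrightarrow> b \<in> basis Sg qs \<Longrightarrow>
  quadform Sg qs A (\<lambda>z. (if z = a then \<alpha> else 0) + (if z = b then \<beta> else 0)) =
   cnj \<alpha> * A a a * \<alpha> + cnj \<alpha> * A a b * \<beta> + cnj \<beta> * A b a * \<alpha> + cnj \<beta> * A b b * \<beta>"
  by (simp add: quadform_sesqform sesqform_add_left sesqform_add_right sesqform_delta)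

lemma psd_diag: "psd Sg qs A \<Longrightarrow> a \<in> basis Sg qs \<Longrightarrow> Im (A a a) = 0 \<and> 0 \<le> Re (A a a)"
proof -
  assume "psd Sg qs A" "a \<in> basis Sg qs"
  then have "Im (quadform Sg qs A (\<lambda>z. if z = a then 1 else 0)) = 0 \<and> 0 \<le> Re (quadform Sg qs A (\<lambda>z. if z = a then 1 else 0))"
    unfolding psd_quadform by blast
  then show ?thesis using quadform_delta[OF \<open>a \<in> basis Sg qs\<close>, of A 1] by simp
qed

lemma psd_herm: assumes "psd Sg qs A" "a \<in> basis Sg qs" "b \<in> basis Sg qs"
  shows "A b a = cnj (A a b)"
proof -
  have p: "\<And>\<psi>. Im (quadform Sg qs A \<psi>) = 0" using assms(1) unfolding psd_quadform by blast
  have 1: "Im (A a a + A a b + A b a + A b b) = 0"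
    using p[of "\<lambda>z. (if z = a then 1 else 0) + (if z = b then 1 else 0)"] quadform_delta_pair[OF assms(2,3), of A 1 1] by simp
  have 2: "Im (A a a + A a b * \<i> - \<i> * A b a + A b b) = 0"
    using p[of "\<lambda>z. (if z = a then 1 else 0) + (if z = b then \<i> else 0)"] quadform_delta_pair[OF assms(2,3), of A 1 \<i>] by simp
  have da: "Im (A a a) = 0" "Im (A b b) = 0" using psd_diag assms by auto
  have "Re (A b a) = Re (A a b)" "Im (A b a) = - Im (A a b)" using 1 2 da by simp_all
  then show ?thesis by (simp add: complex_eq_iff)
qed

lemma psd_entry:
  assumes A: "psd Sg qs A" and a: "a \<in> basis Sg qs" and b: "b \<in> basis Sg qs"
  shows "cmod (A a b) \<le> (Re (A a a) + Re (A b b)) / 2"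
proof (cases "a = b \<or> A a b = 0")
  case True
  then show ?thesis using psd_diag[OF A a] psd_diag[OF A b] by (auto simp: cmod_eq_Re)
next
  case False
  define c where "c = cmod (A a b)"
  have c0: "c \<noteq> 0" using False unfolding c_def by simp
  have sq: "A a b * cnj (A a b) = complex_of_real c * complex_of_real c"
    unfolding c_def using complex_norm_square[of "A a b"] by (simp add: power2_eq_square)
  \<comment> \<open>the phase u turns the off-diagonal terms of the quadratic form into -2 |A a b|\<close>
  define u where "u = - cnj (A a b) / complex_of_real c"
  have abu: "A a b * u = - complex_of_real c"
    unfolding u_def using c0 sq by (simp add: field_simps)
  have bau: "cnj u * A b a = - complex_of_real c"
    using arg_cong[OF abu, of cnj] psd_herm[OF A a b] by (simp add: mult.commute)
  have uu: "cnj u * u = 1"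
    unfolding u_def using c0 sq by (simp add: field_simps)
  have "quadform Sg qs A (\<lambda>z. (if z = a then 1 else 0) + (if z = b then u else 0)) =
      A a a + A b b - 2 * complex_of_real c"
    using quadform_delta_pair[OF a b, of A 1 u] abu bau uu
    by (simp add: algebra_simps)
  moreover have "0 \<le> Re (quadform Sg qs A (\<lambda>z. (if z = a then 1 else 0) + (if z = b then u else 0)))"
    using A unfolding psd_quadform by blast
  ultimately show ?thesis unfolding c_def by simp
qed

lemma sum_reorder4: "(\<Sum>x\<in>A. \<Sum>y\<in>B. \<Sum>u\<in>C. \<Sum>v\<in>D. f x y u v) = (\<Sum>u\<in>C. \<Sum>v\<in>D. \<Sum>x\<in>A. \<Sum>y\<in>B. f x y u v)"
proof -
  have "(\<Sum>x\<in>A. \<Sum>y\<in>B. \<Sum>u\<in>C. \<Sum>v\<in>D. f x y u v) = (\<Sum>x\<in>A. \<Sum>u\<in>C. \<Sum>y\<in>B. \<Sum>v\<in>D. f x y u v)"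
    by (rule sum.cong[OF refl], rule sum.swap)
  also have "\<dots> = (\<Sum>x\<in>A. \<Sum>u\<in>C. \<Sum>v\<in>D. \<Sum>y\<in>B. f x y u v)"
    by (rule sum.cong[OF refl], rule sum.cong[OF refl], rule sum.swap)
  also have "\<dots> = (\<Sum>u\<in>C. \<Sum>x\<in>A. \<Sum>v\<in>D. \<Sum>y\<in>B. f x y u v)" by (rule sum.swap)
  also have "\<dots> = (\<Sum>u\<in>C. \<Sum>v\<in>D. \<Sum>x\<in>A. \<Sum>y\<in>B. f x y u v)"
    by (rule sum.cong[OF refl], rule sum.swap)
  finally show ?thesis .
qed

lemma quadform_opmult_conj: "quadform Sg qs (opmult Sg qs (opmult Sg qs K M) (adj K)) \<psi> =
   quadform Sg qs M (\<lambda>v. \<Sum>y\<in>basis Sg qs. cnj (K y v) * \<psi> y)"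
proof -
  let ?X = "basis Sg qs"
  have "quadform Sg qs (opmult Sg qs (opmult Sg qs K M) (adj K)) \<psi> =
     (\<Sum>x\<in>?X. \<Sum>y\<in>?X. \<Sum>v\<in>?X. \<Sum>u\<in>?X. cnj (\<psi> x) * K x u * M u v * cnj (K y v) * \<psi> y)"
    unfolding quadform_def opmult_def adj_def
    by (intro sum.cong refl) (simp add: sum_distrib_left sum_distrib_right mult.assoc)
  also have "\<dots> = (\<Sum>v\<in>?X. \<Sum>u\<in>?X. \<Sum>x\<in>?X. \<Sum>y\<in>?X. cnj (\<psi> x) * K x u * M u v * cnj (K y v) * \<psi> y)"
    by (rule sum_reorder4)
  also have "\<dots> = (\<Sum>u\<in>?X. \<Sum>v\<in>?X. \<Sum>x\<in>?X. \<Sum>y\<in>?X. cnj (\<psi> x) * K x u * M u v * cnj (K y v) * \<psi> y)"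
    by (rule sum.swap)
  also have "\<dots> = quadform Sg qs M (\<lambda>v. \<Sum>y\<in>basis Sg qs. cnj (K y v) * \<psi> y)"
    unfolding quadform_def
    by (intro sum.cong refl, simp add: sum_distrib_left sum_distrib_right mult.assoc mult.left_commute, rule sum.swap)
  finally show ?thesis .
qed

lemma psd_opmult_conj: "psd Sg qs M \<Longrightarrow> psd Sg qs (opmult Sg qs (opmult Sg qs K M) (adj K))"
  unfolding psd_quadform quadform_opmult_conj by blast

lemma quadform_tendsto:
  assumes "\<forall>x\<in>basis Sg qs. \<forall>y\<in>basis Sg qs. (\<lambda>n. R n x y) \<longlonglongrightarrow> L x y"
  shows "(\<lambda>n. quadform Sg qs (R n) \<psi>) \<longlonglongrightarrow> quadform Sg qs L \<psi>"
  unfolding quadform_def using assms by (auto intro!: tendsto_sum tendsto_mult tendsto_const)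

lemma psd_tendsto:
  assumes "\<forall>x\<in>basis Sg qs. \<forall>y\<in>basis Sg qs. (\<lambda>n. R n x y) \<longlonglongrightarrow> L x y"
    and "\<And>n. psd Sg qs (R n)"
  shows "psd Sg qs L"
  unfolding psd_quadform
proof
  fix \<psi>
  have t: "(\<lambda>n. quadform Sg qs (R n) \<psi>) \<longlonglongrightarrow> quadform Sg qs L \<psi>" by (rule quadform_tendsto[OF assms(1)])
  have "(\<lambda>n. Im (quadform Sg qs (R n) \<psi>)) \<longlonglongrightarrow> Im (quadform Sg qs L \<psi>)" by (intro tendsto_intros t)
  moreover have "\<And>n. Im (quadform Sg qs (R n) \<psi>) = 0" using assms(2) unfolding psd_quadform by blast
  ultimately have 1: "Im (quadform Sg qs L \<psi>) = 0" by (simp add: LIMSEQ_const_iff)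
  have "(\<lambda>n. Re (quadform Sg qs (R n) \<psi>)) \<longlonglongrightarrow> Re (quadform Sg qs L \<psi>)" by (intro tendsto_intros t)
  moreover have "\<And>n. 0 \<le> Re (quadform Sg qs (R n) \<psi>)" using assms(2) unfolding psd_quadform by blast
  ultimately have 2: "0 \<le> Re (quadform Sg qs L \<psi>)" by (meson LIMSEQ_le_const)
  show "Im (quadform Sg qs L \<psi>) = 0 \<and> 0 \<le> Re (quadform Sg qs L \<psi>)" using 1 2 by simp
qed

lemma tendsto_opdiff:
  assumes "\<forall>x\<in>basis Sg qs. \<forall>y\<in>basis Sg qs. (\<lambda>n. R n x y) \<longlonglongrightarrow> L x y"
  shows "\<forall>x\<in>basis Sg qs. \<forall>y\<in>basis Sg qs. (\<lambda>n. opdiff B (R n) x y) \<longlonglongrightarrow> opdiff B L x y"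
  using assms unfolding opdiff_def by (auto intro!: tendsto_intros)

lemma loewner_tendsto:
  assumes "\<forall>x\<in>basis Sg qs. \<forall>y\<in>basis Sg qs. (\<lambda>n. R n x y) \<longlonglongrightarrow> L x y"
    and "\<And>n. loewner Sg qs (R n) B"
  shows "loewner Sg qs L B"
  unfolding loewner_def
  by (rule psd_tendsto[OF tendsto_opdiff[OF assms(1)]]) (use assms(2) in \<open>auto simp: loewner_def\<close>)

lemma opmult_tendsto:
  assumes "\<forall>x\<in>basis Sg qs. \<forall>y\<in>basis Sg qs. (\<lambda>n. R n x y) \<longlonglongrightarrow> L x y"
    and "\<forall>x\<in>basis Sg qs. \<forall>y\<in>basis Sg qs. (\<lambda>n. R' n x y) \<longlonglongrightarrow> L' x y"
    and "x \<in> basis Sg qs" "y \<in> basis Sg qs"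
  shows "(\<lambda>n. opmult Sg qs (R n) (R' n) x y) \<longlonglongrightarrow> opmult Sg qs L L' x y"
  unfolding opmult_def using assms by (auto intro!: tendsto_sum tendsto_mult)

lemma quadform_mono_convergent:
  assumes mono: "\<And>n. loewner Sg qs (R n) (R (Suc n))" and bd: "\<And>n. loewner Sg qs (R n) B"
  shows "convergent (\<lambda>n. quadform Sg qs (R n) \<psi>)"
proof -
  have im: "\<And>n. Im (quadform Sg qs (R n) \<psi>) = Im (quadform Sg qs B \<psi>)" using bd unfolding loewner_quadform by blast
  have inc: "incseq (\<lambda>n. Re (quadform Sg qs (R n) \<psi>))"
    using mono unfolding loewner_quadform by (intro incseq_SucI) blast
  have b: "\<forall>i. Re (quadform Sg qs (R i) \<psi>) \<le> Re (quadform Sg qs B \<psi>)" using bd unfolding loewner_quadform by blast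
  obtain L where L: "(\<lambda>n. Re (quadform Sg qs (R n) \<psi>)) \<longlonglongrightarrow> L" using incseq_convergent[OF inc b] by blast
  have "(\<lambda>n. Complex (Re (quadform Sg qs (R n) \<psi>)) (Im (quadform Sg qs (R n) \<psi>))) \<longlonglongrightarrow> Complex L (Im (quadform Sg qs B \<psi>))"
    unfolding im by (intro tendsto_intros L)
  then show ?thesis unfolding convergent_def by (auto simp: complex_eq_iff)
qed

\<comment> \<open>By polarization, R n a b is a fixed linear combination of four convergent quadratic forms.\<close>
lemma mono_bounded_entry_convergent:
  assumes mono: "\<And>n. loewner Sg qs (R n) (R (Suc n))" and bd: "\<And>n. loewner Sg qs (R n) B"
    and a: "a \<in> basis Sg qs" and b: "b \<in> basis Sg qs"
  shows "convergent (\<lambda>n. R n a b)"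
proof (cases "a = b")
  case True
  have "convergent (\<lambda>n. quadform Sg qs (R n) (\<lambda>z. if z = a then 1 else 0))" by (rule quadform_mono_convergent[of qs R, OF mono bd])
  then show ?thesis using quadform_delta[OF a] True by simp
next
  case False
  define q1 where "q1 = (\<lambda>n. quadform Sg qs (R n) (\<lambda>z. (if z = a then 1 else 0) + (if z = b then 1 else 0)))"
  define q2 where "q2 = (\<lambda>n. quadform Sg qs (R n) (\<lambda>z. (if z = a then 1 else 0) + (if z = b then \<i> else 0)))"
  define q3 where "q3 = (\<lambda>n. quadform Sg qs (R n) (\<lambda>z. if z = a then 1 else 0))"
  define q4 where "q4 = (\<lambda>n. quadform Sg qs (R n) (\<lambda>z. if z = b then 1 else 0))"
  have c: "convergent q1" "convergent q2" "convergent q3" "convergent q4"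
    unfolding q1_def q2_def q3_def q4_def by (rule quadform_mono_convergent[of qs R, OF mono bd])+
  have e1: "q1 n = R n a a + R n a b + R n b a + R n b b" for n
    unfolding q1_def using quadform_delta_pair[OF a b] by simp
  have e2: "q2 n = R n a a + R n a b * \<i> - \<i> * R n b a + R n b b" for n
  proof -
    have "q2 n = cnj 1 * R n a a * 1 + cnj 1 * R n a b * \<i> + cnj \<i> * R n b a * 1 + cnj \<i> * R n b b * \<i>"
      unfolding q2_def by (rule quadform_delta_pair[OF a b])
    also have "\<dots> = R n a a + R n a b * \<i> - \<i> * R n b a + R n b b"
      by (simp add: algebra_simps)
    finally show ?thesis .
  qed
  have e3: "q3 n = R n a a" for n unfolding q3_def using quadform_delta[OF a] by simp
  have e4: "q4 n = R n b b" for n unfolding q4_def using quadform_delta[OF b] by simp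
  have eq: "(\<lambda>n. R n a b) = (\<lambda>n. (q1 n - \<i> * q2 n - (1 - \<i>) * (q3 n + q4 n)) / 2)"
    by (rule ext) (simp add: e1 e2 e3 e4 algebra_simps)
  from c obtain l1 l2 l3 l4 where "q1 \<longlonglongrightarrow> l1" "q2 \<longlonglongrightarrow> l2" "q3 \<longlonglongrightarrow> l3" "q4 \<longlonglongrightarrow> l4"
    unfolding convergent_def by blast
  then have "(\<lambda>n. (q1 n - \<i> * q2 n - (1 - \<i>) * (q3 n + q4 n)) / 2) \<longlonglongrightarrow> (l1 - \<i> * l2 - (1 - \<i>) * (l3 + l4)) / 2"
    by (intro tendsto_intros) simp_all
  then show ?thesis unfolding eq convergent_def by blast
qed

lemma mono_bounded_tendsto:
  assumes mono: "\<And>n. loewner Sg qs (R n) (R (Suc n))" and bd: "\<And>n. loewner Sg qs (R n) B"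
  shows "\<forall>x\<in>basis Sg qs. \<forall>y\<in>basis Sg qs. (\<lambda>n. R n x y) \<longlonglongrightarrow> (\<lambda>x y. lim (\<lambda>n. R n x y)) x y"
  using mono_bounded_entry_convergent[of qs R B, OF mono bd] by (simp add: convergent_LIMSEQ_iff)

lemma supported_cut_op[simp]: "supported Sg qs (cut_op Sg qs A)"
  unfolding supported_def cut_op_def by auto
lemma eq_on_cut_op: "eq_on Sg qs (cut_op Sg qs A) A" unfolding eq_on_def cut_op_def by auto
lemma supported_eq: "supported Sg qs A \<Longrightarrow> supported Sg qs B \<Longrightarrow> eq_on Sg qs A B \<Longrightarrow> A = B"
  unfolding supported_def eq_on_def by (intro ext) metis
lemma supported_opmult[simp]: "supported Sg qs A \<Longrightarrow> supported Sg qs B \<Longrightarrow> supported Sg qs (opmult Sg qs A B)"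
  unfolding supported_def opmult_def by auto
lemma supported_opadd[simp]: "supported Sg qs A \<Longrightarrow> supported Sg qs B \<Longrightarrow> supported Sg qs (opadd A B)"
  unfolding supported_def opadd_def by auto
lemma supported_opdiff[simp]: "supported Sg qs A \<Longrightarrow> supported Sg qs B \<Longrightarrow> supported Sg qs (opdiff A B)"
  unfolding supported_def opdiff_def by auto
lemma supported_opscale[simp]: "supported Sg qs A \<Longrightarrow> supported Sg qs (opscale c A)"
  unfolding supported_def opscale_def by auto
lemma supported_opzero[simp]: "supported Sg qs opzero"
  unfolding supported_def opzero_def by auto

lemma opId_on_left: "supported Sg qs A \<Longrightarrow> opmult Sg qs (opId_on Sg qs) A = A"
proof (rule ext, rule ext)
  fix x y assume s: "supported Sg qs A"
  show "opmult Sg qs (opId_on Sg qs) A x y = A x y"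
  proof (cases "x \<in> basis Sg qs")
    case True
    have "opmult Sg qs (opId_on Sg qs) A x y = opmult Sg qs opId A x y"
      unfolding opmult_def cut_op_def using True by (intro sum.cong) auto
    then show ?thesis using opId_left[OF True] by simp
  next
    case False
    then show ?thesis using s unfolding opmult_def cut_op_def supported_def by auto
  qed
qed

lemma opId_on_right: "supported Sg qs A \<Longrightarrow> opmult Sg qs A (opId_on Sg qs) = A"
proof (rule ext, rule ext)
  fix x y assume s: "supported Sg qs A"
  show "opmult Sg qs A (opId_on Sg qs) x y = A x y"
  proof (cases "y \<in> basis Sg qs")
    case True
    have "opmult Sg qs A (opId_on Sg qs) x y = opmult Sg qs A opId x y"
      unfolding opmult_def cut_op_def using True by (intro sum.cong) auto
    then show ?thesis using opId_right[OF True] by simp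
  next
    case False
    then show ?thesis using s unfolding opmult_def cut_op_def supported_def by auto
  qed
qed

lemma supported_adj[simp]: "supported Sg qs A \<Longrightarrow> supported Sg qs (adj A)"
  unfolding supported_def adj_def by auto
lemma adj_opId_on[simp]: "adj (opId_on Sg qs) = opId_on Sg qs"
  unfolding adj_def cut_op_def opId_def by (auto intro!: ext)

lemma herm_adj: assumes "supported Sg qs A" "psd Sg qs A" shows "adj A = A"
proof (rule supported_eq[of qs])
  show "eq_on Sg qs (adj A) A" unfolding eq_on_def adj_def using psd_herm[OF assms(2)] by metis
qed (use assms in simp_all)

lemma psd_opId: "psd Sg qs opId"
proof -
  have "quadform Sg qs opId \<psi> = (\<Sum>x\<in>basis Sg qs. cnj (\<psi> x) * \<psi> x)" for \<psi>
  proof -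
    have "quadform Sg qs opId \<psi> = (\<Sum>x\<in>basis Sg qs. \<Sum>y\<in>basis Sg qs. (cnj (\<psi> x)) * (if y = x then \<psi> y else 0))"
      unfolding quadform_def opId_def by (intro sum.cong refl) auto
    also have "\<dots> = (\<Sum>x\<in>basis Sg qs. cnj (\<psi> x) * \<psi> x)"
      by (intro sum.cong refl) (simp add: sum_distrib_left[symmetric] sum.delta')
    finally show ?thesis .
  qed
  moreover have "Im (cnj z * z) = 0 \<and> 0 \<le> Re (cnj z * z)" for z :: complex
    by (simp add: algebra_simps)
  ultimately show ?thesis unfolding psd_quadform by (simp add: Im_sum Re_sum sum_nonneg)
qed

lemma psd_opId_on: "psd Sg qs (opId_on Sg qs)"
  using psd_cong[OF eq_on_cut_op] psd_opId by blast

lemma psd_half: "psd Sg qs A \<Longrightarrow> psd Sg qs (opscale (1/2) A)"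
  unfolding psd_quadform quadform_opscale by simp

lemma psd_tr: "psd Sg qs A \<Longrightarrow> Im (tr Sg qs A) = 0 \<and> 0 \<le> Re (tr Sg qs A)"
proof -
  assume "psd Sg qs A"
  then have "\<forall>x\<in>basis Sg qs. Im (A x x) = 0 \<and> 0 \<le> Re (A x x)" using psd_diag by blast
  then show ?thesis unfolding tr_def by (simp add: Im_sum Re_sum sum_nonneg)
qed

lemma psd_tr_eq_zero: assumes "psd Sg qs A" "tr Sg qs A = 0" shows "eq_on Sg qs A opzero"
proof -
  have d: "\<forall>x\<in>basis Sg qs. Re (A x x) = 0"
  proof -
    have "(\<Sum>x\<in>basis Sg qs. Re (A x x)) = 0" using assms(2) unfolding tr_def by (simp add: Re_sum[symmetric])
    then show ?thesis using sum_nonneg_eq_0_iff[of "basis Sg qs" "\<lambda>x. Re (A x x)"] psd_diag[OF assms(1)] by simp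
  qed
  show ?thesis unfolding eq_on_def opzero_def
  proof (intro ballI)
    fix x y assume x: "x \<in> basis Sg qs" and y: "y \<in> basis Sg qs"
    have "cmod (A x y) \<le> (Re (A x x) + Re (A y y)) / 2" by (rule psd_entry[OF assms(1) x y])
    then show "A x y = 0" using d x y by simp
  qed
qed

lemma herm_square_eq_zero: assumes s: "supported Sg qs H" and h: "adj H = H" and z: "opmult Sg qs H H = opzero"
  shows "H = opzero"
proof (rule supported_eq[of qs], fact, simp, unfold eq_on_def, intro ballI)
  fix x y assume x: "x \<in> basis Sg qs" and y: "y \<in> basis Sg qs"
  have hc: "H z x = cnj (H x z)" for z using fun_cong[OF fun_cong[OF h, of x], of z] unfolding adj_def by (metis complex_cnj_cnj)
  have "0 = opmult Sg qs H H x x" using z unfolding opzero_def by metis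
  also have "\<dots> = (\<Sum>z\<in>basis Sg qs. complex_of_real ((cmod (H x z))\<^sup>2))"
    unfolding opmult_def hc by (intro sum.cong refl) (metis complex_norm_square)
  finally have "(\<Sum>z\<in>basis Sg qs. (cmod (H x z))\<^sup>2) = 0"
    by (metis of_real_eq_0_iff of_real_sum)
  then have "\<forall>z\<in>basis Sg qs. (cmod (H x z))\<^sup>2 = 0" by (subst (asm) sum_nonneg_eq_0_iff) auto
  then show "H x y = opzero x y" using y unfolding opzero_def by simp
qed

lemma opmult_sum_right: "opmult Sg qs Q (\<lambda>a b. \<Sum>x\<in>S. F x a b) = (\<lambda>a b. \<Sum>x\<in>S. opmult Sg qs Q (F x) a b)"
  unfolding opmult_def sum_distrib_left by (intro ext) (rule sum.swap)
lemma opmult_sum_left: "opmult Sg qs (\<lambda>a b. \<Sum>x\<in>S. F x a b) Q = (\<lambda>a b. \<Sum>x\<in>S. opmult Sg qs (F x) Q a b)"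
  unfolding opmult_def sum_distrib_right by (intro ext) (rule sum.swap)
lemma tr_sum: "tr Sg qs (\<lambda>a b. \<Sum>x\<in>S. F x a b) = (\<Sum>x\<in>S. tr Sg qs (F x))"
  unfolding tr_def by (rule sum.swap)
lemma quadform_sum: "quadform Sg qs (\<lambda>a b. \<Sum>x\<in>S. F x a b) \<psi> = (\<Sum>x\<in>S. quadform Sg qs (F x) \<psi>)"
proof -
  have "quadform Sg qs (\<lambda>a b. \<Sum>x\<in>S. F x a b) \<psi> = (\<Sum>a\<in>basis Sg qs. \<Sum>b\<in>basis Sg qs. \<Sum>x\<in>S. cnj (\<psi> a) * F x a b * \<psi> b)"
    unfolding quadform_def by (simp add: sum_distrib_left sum_distrib_right)
  also have "\<dots> = (\<Sum>a\<in>basis Sg qs. \<Sum>x\<in>S. \<Sum>b\<in>basis Sg qs. cnj (\<psi> a) * F x a b * \<psi> b)"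
    by (rule sum.cong[OF refl], rule sum.swap)
  also have "\<dots> = (\<Sum>x\<in>S. quadform Sg qs (F x) \<psi>)" unfolding quadform_def by (rule sum.swap)
  finally show ?thesis .
qed
lemma psd_sum: "(\<And>x. x \<in> S \<Longrightarrow> psd Sg qs (F x)) \<Longrightarrow> psd Sg qs (\<lambda>a b. \<Sum>x\<in>S. F x a b)"
  unfolding psd_quadform quadform_sum by (simp add: Im_sum Re_sum sum_nonneg)
lemma eq_on_sum: "(\<And>x. x \<in> S \<Longrightarrow> eq_on Sg qs (F x) (G x)) \<Longrightarrow> eq_on Sg qs (\<lambda>a b. \<Sum>x\<in>S. F x a b) (\<lambda>a b. \<Sum>x\<in>S. G x a b)"
  unfolding eq_on_def by simp

lemma sum_list_as_sum: "(\<lambda>a b. sum_list (map (\<lambda>x. F x a b) L)) = (\<lambda>a b. \<Sum>i\<in>{..<length L}. F (L!i) a b)"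
  by (simp add: sum_list_sum_nth atLeast0LessThan)

lemma opmult_sum_list_right: "opmult Sg qs Q (\<lambda>a b. sum_list (map (\<lambda>x. F x a b) L)) = (\<lambda>a b. sum_list (map (\<lambda>x. opmult Sg qs Q (F x) a b) L))"
  unfolding sum_list_as_sum opmult_sum_right ..
lemma opmult_sum_list_left: "opmult Sg qs (\<lambda>a b. sum_list (map (\<lambda>x. F x a b) L)) Q = (\<lambda>a b. sum_list (map (\<lambda>x. opmult Sg qs (F x) Q a b) L))"
  unfolding sum_list_as_sum opmult_sum_left ..
lemma tr_sum_list: "tr Sg qs (\<lambda>a b. sum_list (map (\<lambda>x. F x a b) L)) = sum_list (map (\<lambda>x. tr Sg qs (F x)) L)"
  unfolding sum_list_as_sum tr_sum by (simp add: sum_list_sum_nth atLeast0LessThan)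
lemma psd_sum_list: "(\<And>x. x \<in> set L \<Longrightarrow> psd Sg qs (F x)) \<Longrightarrow> psd Sg qs (\<lambda>a b. sum_list (map (\<lambda>x. F x a b) L))"
  unfolding sum_list_as_sum by (rule psd_sum) auto
lemma eq_on_sum_list: "(\<And>x. x \<in> set L \<Longrightarrow> eq_on Sg qs (F x) (G x)) \<Longrightarrow>
   eq_on Sg qs (\<lambda>a b. sum_list (map (\<lambda>x. F x a b) L)) (\<lambda>a b. sum_list (map (\<lambda>x. G x a b) L))"
  unfolding sum_list_as_sum by (rule eq_on_sum) auto
lemma opdiff_sum_list: "opdiff (\<lambda>a b. sum_list (map (\<lambda>x. F x a b) L)) (\<lambda>a b. sum_list (map (\<lambda>x. G x a b) L))
   = (\<lambda>a b. sum_list (map (\<lambda>x. opdiff (F x) (G x) a b) L))"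
  unfolding opdiff_def by (induct L) (auto simp: fun_eq_iff)
lemma opdiff_sum: "opdiff (\<lambda>a b. \<Sum>x\<in>S. F x a b) (\<lambda>a b. \<Sum>x\<in>S. G x a b) = (\<lambda>a b. \<Sum>x\<in>S. opdiff (F x) (G x) a b)"
  unfolding opdiff_def by (simp add: sum_subtractf)

end

section \<open>Square roots of positive contractions\<close>

\<comment> \<open>For 0 <= C <= I the iterates increase to the solution Y of Y = (C + Y Y)/2, i.e. of
  (I - Y)(I - Y) = I - C; this yields square roots without any spectral theory.\<close>
fun sqrt_iter :: "('v \<Rightarrow> 'a set) \<Rightarrow> 'v set \<Rightarrow> ('v,'a::zero) op \<Rightarrow> nat \<Rightarrow> ('v,'a) op" where
  "sqrt_iter Sg qs C 0 = opzero"
| "sqrt_iter Sg qs C (Suc k) = opscale (1/2) (opadd C (opmult Sg qs (sqrt_iter Sg qs C k) (sqrt_iter Sg qs C k)))"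

fun oppow :: "('v \<Rightarrow> 'a set) \<Rightarrow> 'v set \<Rightarrow> ('v,'a::zero) op \<Rightarrow> nat \<Rightarrow> ('v,'a) op" where
  "oppow Sg qs C 0 = opId_on Sg qs"
| "oppow Sg qs C (Suc e) = opmult Sg qs C (oppow Sg qs C e)"

definition pow_comb :: "('v \<Rightarrow> 'a set) \<Rightarrow> 'v set \<Rightarrow> ('v,'a::zero) op \<Rightarrow> (real \<times> nat) list \<Rightarrow> ('v,'a) op" where
  "pow_comb Sg qs C L =
     foldr (\<lambda>(c,e) acc. opadd (opscale (complex_of_real c) (oppow Sg qs C e)) acc) L opzero"

definition nonneg_poly :: "('v \<Rightarrow> 'a set) \<Rightarrow> 'v set \<Rightarrow> ('v,'a::zero) op \<Rightarrow> ('v,'a) op \<Rightarrow> bool" where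
  "nonneg_poly Sg qs C X \<longleftrightarrow> (\<exists>L. (\<forall>p\<in>set L. 0 \<le> fst p) \<and> X = pow_comb Sg qs C L)"

context
  fixes Sg :: "'v::finite \<Rightarrow> 'a::{finite,zero} set" and qs :: "'v set" and C :: "('v,'a) op"
  assumes sC: "supported Sg qs C" and pC: "psd Sg qs C" and bC: "psd Sg qs (opdiff (opId_on Sg qs) C)"
begin

lemma oppow_supported[simp]: "supported Sg qs (oppow Sg qs C e)"
  by (induct e) (simp_all add: sC)

lemma oppow_add: "oppow Sg qs C (a + b) = opmult Sg qs (oppow Sg qs C a) (oppow Sg qs C b)"
  by (induct a) (simp_all add: opId_on_left opmult_assoc)

lemma oppow_1: "oppow Sg qs C 1 = C" by (simp add: opId_on_right sC)

lemma adj_oppow: "adj (oppow Sg qs C e) = oppow Sg qs C e"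
proof (induct e)
  case (Suc e)
  have "opmult Sg qs (oppow Sg qs C e) C = opmult Sg qs C (oppow Sg qs C e)"
    using oppow_add[of e 1] oppow_add[of 1 e] oppow_1 by (simp add: add.commute)
  then show ?case using Suc herm_adj[OF sC pC] by (simp add: adj_opmult)
qed simp

lemma psd_oppow: "psd Sg qs (oppow Sg qs C e)"
proof -
  have "e = e div 2 + e div 2 \<or> e = e div 2 + (1 + e div 2)" by presburger
  then obtain m where "e = m + m \<or> e = m + (1 + m)" by blast
  then show ?thesis
  proof
    assume e: "e = m + m"
    have "oppow Sg qs C e = opmult Sg qs (opmult Sg qs (oppow Sg qs C m) (opId_on Sg qs)) (adj (oppow Sg qs C m))"
      unfolding e oppow_add adj_oppow by (simp add: opId_on_right)
    then show ?thesis using psd_opmult_conj psd_opId_on by metis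
  next
    assume e: "e = m + (1 + m)"
    have "oppow Sg qs C e = opmult Sg qs (opmult Sg qs (oppow Sg qs C m) C) (adj (oppow Sg qs C m))"
      unfolding e oppow_add adj_oppow oppow_1 by (simp add: opmult_assoc)
    then show ?thesis using psd_opmult_conj pC by metis
  qed
qed

lemma pow_comb_Nil[simp]: "pow_comb Sg qs C [] = opzero"
  unfolding pow_comb_def by simp

lemma pow_comb_Cons:
  "pow_comb Sg qs C ((c,e) # L) = opadd (opscale (complex_of_real c) (oppow Sg qs C e)) (pow_comb Sg qs C L)"
  unfolding pow_comb_def by simp

lemma pow_comb_append: "pow_comb Sg qs C (L1 @ L2) = opadd (pow_comb Sg qs C L1) (pow_comb Sg qs C L2)"
  by (induct L1) (auto simp: pow_comb_Cons opadd_assoc)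

lemma psd_pow_comb: "\<forall>p\<in>set L. 0 \<le> fst p \<Longrightarrow> psd Sg qs (pow_comb Sg qs C L)"
  by (induct L) (auto simp: pow_comb_Cons psd_add psd_opscale psd_oppow)

lemma opscale_pow_comb:
  "opscale (complex_of_real r) (pow_comb Sg qs C L) = pow_comb Sg qs C (map (\<lambda>(c,e). (r*c, e)) L)"
  by (induct L) (auto simp: pow_comb_Cons opscale_opadd opscale_opscale)

lemma opmult_oppow_pow_comb:
  "opmult Sg qs (oppow Sg qs C e) (pow_comb Sg qs C L) = pow_comb Sg qs C (map (\<lambda>(c,e'). (c, e + e')) L)"
  by (induct L) (auto simp: pow_comb_Cons opmult_add_right opmult_opscale_right oppow_add)

lemma opmult_pow_comb: "opmult Sg qs (pow_comb Sg qs C L) (pow_comb Sg qs C L') =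
   pow_comb Sg qs C (concat (map (\<lambda>(c,e). map (\<lambda>(c',e'). (c*c', e+e')) L') L))"
proof (induct L)
  case (Cons ce L)
  obtain c e where ce: "ce = (c,e)" by fastforce
  have "opmult Sg qs (opscale (complex_of_real c) (oppow Sg qs C e)) (pow_comb Sg qs C L') =
        pow_comb Sg qs C (map (\<lambda>(c',e'). (c*c', e+e')) L')"
    unfolding opmult_opscale_left opmult_oppow_pow_comb opscale_pow_comb by (simp add: split_def comp_def)
  then show ?case using Cons by (simp add: pow_comb_Cons ce opmult_add_left pow_comb_append)
qed simp

lemma nonneg_poly_zero: "nonneg_poly Sg qs C opzero"
  unfolding nonneg_poly_def by (intro exI[of _ "[]"]) simp

lemma nonneg_poly_C: "nonneg_poly Sg qs C C"
  unfolding nonneg_poly_def by (intro exI[of _ "[(1,1)]"]) (simp add: pow_comb_Cons opId_on_right sC opscale_def)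

lemma nonneg_poly_add:
  "nonneg_poly Sg qs C X \<Longrightarrow> nonneg_poly Sg qs C Y \<Longrightarrow> nonneg_poly Sg qs C (opadd X Y)"
  unfolding nonneg_poly_def by (metis Un_iff pow_comb_append set_append)

lemma nonneg_poly_mult:
  "nonneg_poly Sg qs C X \<Longrightarrow> nonneg_poly Sg qs C Y \<Longrightarrow> nonneg_poly Sg qs C (opmult Sg qs X Y)"
proof -
  assume "nonneg_poly Sg qs C X" "nonneg_poly Sg qs C Y"
  then obtain L L' where "\<forall>p\<in>set L. 0 \<le> fst p" "X = pow_comb Sg qs C L"
    and "\<forall>p\<in>set L'. 0 \<le> fst p" "Y = pow_comb Sg qs C L'"
    unfolding nonneg_poly_def by blast
  moreover have "opmult Sg qs X Y = pow_comb Sg qs C (concat (map (\<lambda>(c,e). map (\<lambda>(c',e'). (c*c', e+e')) L') L))"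
    using calculation by (simp add: opmult_pow_comb)
  ultimately show ?thesis unfolding nonneg_poly_def by (intro exI conjI) (auto simp: split_def)
qed

lemma nonneg_poly_half: "nonneg_poly Sg qs C X \<Longrightarrow> nonneg_poly Sg qs C (opscale (1/2) X)"
proof -
  assume "nonneg_poly Sg qs C X"
  then obtain L where "\<forall>p\<in>set L. 0 \<le> fst p" "X = pow_comb Sg qs C L"
    unfolding nonneg_poly_def by blast
  then show ?thesis unfolding nonneg_poly_def using opscale_pow_comb[of "1/2" L]
    by (intro exI[of _ "map (\<lambda>(c,e). (1/2*c, e)) L"]) (auto simp: split_def)
qed

lemma psd_nonneg_poly: "nonneg_poly Sg qs C X \<Longrightarrow> psd Sg qs X"
  unfolding nonneg_poly_def using psd_pow_comb by blast

lemma sqrt_iter_supported[simp]: "supported Sg qs (sqrt_iter Sg qs C k)"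
  by (induct k) (simp_all add: sC)

lemma nonneg_poly_sqrt_iter: "nonneg_poly Sg qs C (sqrt_iter Sg qs C k)"
  by (induct k) (simp_all add: nonneg_poly_zero nonneg_poly_half nonneg_poly_add nonneg_poly_C nonneg_poly_mult)

lemma opmult_C_sqrt_iter: "opmult Sg qs C (sqrt_iter Sg qs C k) = opmult Sg qs (sqrt_iter Sg qs C k) C"
proof (induct k)
  case (Suc k)
  let ?Y = "sqrt_iter Sg qs C k"
  have "opmult Sg qs C (opmult Sg qs ?Y ?Y) = opmult Sg qs (opmult Sg qs ?Y ?Y) C"
    by (metis Suc opmult_assoc)
  then show ?case by (simp add: opmult_opscale_left opmult_opscale_right opmult_add_left opmult_add_right)
qed simp

lemma sqrt_iter_commute:
  "opmult Sg qs (sqrt_iter Sg qs C k) (sqrt_iter Sg qs C j) = opmult Sg qs (sqrt_iter Sg qs C j) (sqrt_iter Sg qs C k)"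
proof (induct k arbitrary: j)
  case (Suc k)
  let ?Y = "sqrt_iter Sg qs C k" and ?Z = "sqrt_iter Sg qs C j"
  have "opmult Sg qs (opmult Sg qs ?Y ?Y) ?Z = opmult Sg qs ?Z (opmult Sg qs ?Y ?Y)"
    by (metis Suc opmult_assoc)
  then show ?case using opmult_C_sqrt_iter[of j]
    by (simp add: opmult_opscale_left opmult_opscale_right opmult_add_left opmult_add_right)
qed simp

lemma sqrt_iter_diff_Suc: "opdiff (sqrt_iter Sg qs C (Suc (Suc k))) (sqrt_iter Sg qs C (Suc k)) =
  opscale (1/2) (opmult Sg qs (opdiff (sqrt_iter Sg qs C (Suc k)) (sqrt_iter Sg qs C k))
                              (opadd (sqrt_iter Sg qs C (Suc k)) (sqrt_iter Sg qs C k)))"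
proof -
  let ?P = "sqrt_iter Sg qs C (Suc k)" and ?Q = "sqrt_iter Sg qs C k"
  have "opmult Sg qs ?Q ?P = opmult Sg qs ?P ?Q" by (rule sqrt_iter_commute)
  then show ?thesis
    by (simp only: opmult_diff_left opmult_add_right, subst (1) sqrt_iter.simps(2), subst (2) sqrt_iter.simps(2),
        auto simp: opdiff_def opadd_def opscale_def algebra_simps intro!: ext)
qed

\<comment> \<open>Y(k+2) - Y(k+1) = (Y(k+1) - Y k)(Y(k+1) + Y k)/2, and polynomials in C with
  nonnegative coefficients are PSD because all powers of C are.\<close>
lemma nonneg_poly_sqrt_iter_diff: "nonneg_poly Sg qs C (opdiff (sqrt_iter Sg qs C (Suc k)) (sqrt_iter Sg qs C k))"
proof (induct k)
  case 0
  then show ?case by (simp add: nonneg_poly_half nonneg_poly_C)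
next
  case (Suc k)
  then show ?case unfolding sqrt_iter_diff_Suc
    by (intro nonneg_poly_half nonneg_poly_mult nonneg_poly_add nonneg_poly_sqrt_iter)
qed

lemma diff_opmult_self: assumes sY: "supported Sg qs Y"
  shows "opdiff Y (opmult Sg qs Y Y) =
    opadd (opmult Sg qs (opmult Sg qs (opdiff (opId_on Sg qs) Y) Y) (opdiff (opId_on Sg qs) Y))
          (opmult Sg qs (opmult Sg qs Y (opdiff (opId_on Sg qs) Y)) Y)"
proof -
  have "opmult Sg qs (opmult Sg qs (opdiff (opId_on Sg qs) Y) Y) (opdiff (opId_on Sg qs) Y) =
     opdiff (opdiff Y (opmult Sg qs Y Y)) (opdiff (opmult Sg qs Y Y) (opmult Sg qs (opmult Sg qs Y Y) Y))"
    using sY by (simp add: opmult_diff_left opmult_diff_right opId_on_left opId_on_right)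
  moreover have "opmult Sg qs (opmult Sg qs Y (opdiff (opId_on Sg qs) Y)) Y =
     opdiff (opmult Sg qs Y Y) (opmult Sg qs (opmult Sg qs Y Y) Y)"
    using sY by (simp add: opmult_diff_left opmult_diff_right opId_on_left opId_on_right)
  ultimately show ?thesis by (auto simp: opdiff_def opadd_def intro!: ext)
qed

lemma psd_compl_sqrt_iter: "psd Sg qs (opdiff (opId_on Sg qs) (sqrt_iter Sg qs C k))"
proof (induct k)
  case 0
  show ?case using psd_opId_on by simp
next
  case (Suc k)
  let ?Y = "sqrt_iter Sg qs C k" and ?I = "opId_on Sg qs"
  have pY: "psd Sg qs ?Y" by (rule psd_nonneg_poly[OF nonneg_poly_sqrt_iter])
  have aY: "adj ?Y = ?Y" by (rule herm_adj[OF sqrt_iter_supported pY])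
  have t1: "psd Sg qs (opmult Sg qs (opmult Sg qs (opdiff ?I ?Y) ?Y) (opdiff ?I ?Y))"
    using psd_opmult_conj[OF pY, of "opdiff ?I ?Y"] by (simp add: adj_opdiff aY)
  have t2: "psd Sg qs (opmult Sg qs (opmult Sg qs ?Y (opdiff ?I ?Y)) ?Y)"
    using psd_opmult_conj[OF Suc, of ?Y] by (simp add: aY)
  have "psd Sg qs (opdiff ?Y (opmult Sg qs ?Y ?Y))"
    unfolding diff_opmult_self[OF sqrt_iter_supported] by (rule psd_add[OF t1 t2])
  moreover have "opdiff ?I (sqrt_iter Sg qs C (Suc k)) =
      opscale (1/2) (opadd (opdiff ?I C) (opadd (opdiff ?I ?Y) (opdiff ?Y (opmult Sg qs ?Y ?Y))))"
    by (simp add: fun_eq_iff opdiff_def opadd_def opscale_def) (simp add: field_simps)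
  ultimately show ?case using psd_half psd_add bC Suc by metis
qed

definition "sqrt_iter_lim = (\<lambda>x y. lim (\<lambda>n. sqrt_iter Sg qs C n x y))"

lemma sqrt_iter_tendsto:
  "\<forall>x\<in>basis Sg qs. \<forall>y\<in>basis Sg qs. (\<lambda>n. sqrt_iter Sg qs C n x y) \<longlonglongrightarrow> sqrt_iter_lim x y"
  unfolding sqrt_iter_lim_def
proof (rule mono_bounded_tendsto)
  show "loewner Sg qs (sqrt_iter Sg qs C n) (sqrt_iter Sg qs C (Suc n))" for n
    unfolding loewner_def by (rule psd_nonneg_poly[OF nonneg_poly_sqrt_iter_diff])
  show "loewner Sg qs (sqrt_iter Sg qs C n) (opId_on Sg qs)" for n
    unfolding loewner_def by (rule psd_compl_sqrt_iter)
qed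

lemma sqrt_iter_lim_supported: "supported Sg qs sqrt_iter_lim"
  unfolding supported_def
proof (intro allI impI)
  fix x y assume "x \<notin> basis Sg qs \<or> y \<notin> basis Sg qs"
  then have "(\<lambda>n. sqrt_iter Sg qs C n x y) = (\<lambda>n. 0)"
    using sqrt_iter_supported unfolding supported_def by blast
  then show "sqrt_iter_lim x y = 0" unfolding sqrt_iter_lim_def by (simp add: limI)
qed

lemma sqrt_iter_lim_fixpoint:
  "sqrt_iter_lim = opscale (1/2) (opadd C (opmult Sg qs sqrt_iter_lim sqrt_iter_lim))"
proof (rule supported_eq[of Sg qs])
  show "supported Sg qs sqrt_iter_lim" by (rule sqrt_iter_lim_supported)
  show "supported Sg qs (opscale (1/2) (opadd C (opmult Sg qs sqrt_iter_lim sqrt_iter_lim)))"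
    using sqrt_iter_lim_supported sC by simp
  show "eq_on Sg qs sqrt_iter_lim (opscale (1/2) (opadd C (opmult Sg qs sqrt_iter_lim sqrt_iter_lim)))"
    unfolding eq_on_def
  proof (intro ballI)
    fix x y assume x: "x \<in> basis Sg qs" and y: "y \<in> basis Sg qs"
    have "(\<lambda>n. sqrt_iter Sg qs C (Suc n) x y) \<longlonglongrightarrow> sqrt_iter_lim x y"
      using sqrt_iter_tendsto x y LIMSEQ_Suc by blast
    moreover have "(\<lambda>n. sqrt_iter Sg qs C (Suc n) x y) \<longlonglongrightarrow>
        opscale (1/2) (opadd C (opmult Sg qs sqrt_iter_lim sqrt_iter_lim)) x y"
      unfolding sqrt_iter.simps opscale_def opadd_def
      by (intro tendsto_intros opmult_tendsto[OF sqrt_iter_tendsto sqrt_iter_tendsto x y])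
    ultimately show "sqrt_iter_lim x y = opscale (1/2) (opadd C (opmult Sg qs sqrt_iter_lim sqrt_iter_lim)) x y"
      using LIMSEQ_unique by blast
  qed
qed

lemma sqrt_compl_sqrt_iter_lim:
  "supported Sg qs (opdiff (opId_on Sg qs) sqrt_iter_lim) \<and> psd Sg qs (opdiff (opId_on Sg qs) sqrt_iter_lim) \<and>
   opmult Sg qs (opdiff (opId_on Sg qs) sqrt_iter_lim) (opdiff (opId_on Sg qs) sqrt_iter_lim) = opdiff (opId_on Sg qs) C"
proof (intro conjI)
  show "supported Sg qs (opdiff (opId_on Sg qs) sqrt_iter_lim)" using sqrt_iter_lim_supported by simp
  show "psd Sg qs (opdiff (opId_on Sg qs) sqrt_iter_lim)"
    by (rule psd_tendsto[OF tendsto_opdiff[OF sqrt_iter_tendsto] psd_compl_sqrt_iter])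
  have "sqrt_iter_lim x y = 1/2 * (C x y + opmult Sg qs sqrt_iter_lim sqrt_iter_lim x y)" for x y
    using fun_cong[OF fun_cong[OF sqrt_iter_lim_fixpoint, of x], of y] unfolding opscale_def opadd_def .
  then have "opmult Sg qs sqrt_iter_lim sqrt_iter_lim = opdiff (opscale 2 sqrt_iter_lim) C"
    unfolding opdiff_def opscale_def by (auto simp: field_simps intro!: ext)
  then show "opmult Sg qs (opdiff (opId_on Sg qs) sqrt_iter_lim) (opdiff (opId_on Sg qs) sqrt_iter_lim) =
      opdiff (opId_on Sg qs) C"
    using sqrt_iter_lim_supported by (simp add: opmult_diff_left opmult_diff_right opId_on_left opId_on_right)
       (auto simp: opdiff_def opscale_def intro!: ext)
qed

end

lemma sqrt_exists:
  fixes Sg :: "'v::finite \<Rightarrow> 'a::{finite,zero} set"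
  assumes "psd Sg qs A" "loewner Sg qs A opId"
  shows "\<exists>S. supported Sg qs S \<and> psd Sg qs S \<and> (\<forall>x\<in>basis Sg qs. \<forall>y\<in>basis Sg qs. opmult Sg qs S S x y = A x y)"
proof -
  let ?C = "cut_op Sg qs (opdiff opId A)"
  have sC: "supported Sg qs ?C" by simp
  have pC: "psd Sg qs ?C" using assms(2) psd_cong[OF eq_on_cut_op] unfolding loewner_def by blast
  have e: "eq_on Sg qs (opdiff (opId_on Sg qs) ?C) A" unfolding eq_on_def cut_op_def opdiff_def by simp
  have bC: "psd Sg qs (opdiff (opId_on Sg qs) ?C)" using psd_cong[OF e] assms(1) by blast
  show ?thesis
    using sqrt_compl_sqrt_iter_lim[OF sC pC bC] e unfolding eq_on_def by metis
qed

lemma sandwich_eq_zero_of_tr: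
  fixes Sg :: "'v::finite \<Rightarrow> 'a::{finite,zero} set"
  assumes "supported Sg qs D" "supported Sg qs M" "psd Sg qs M"
    and "tr Sg qs (opmult Sg qs (opmult Sg qs D M) (adj D)) = 0"
  shows "opmult Sg qs (opmult Sg qs D M) (adj D) = opzero"
  using supported_eq[OF _ _ psd_tr_eq_zero[OF psd_opmult_conj[OF assms(3)] assms(4)]] assms(1,2) by simp

lemma herm_cube_eq_zero:
  fixes Sg :: "'v::finite \<Rightarrow> 'a::{finite,zero} set"
  assumes sD: "supported Sg qs D" and aD: "adj D = D" and D3: "opmult Sg qs (opmult Sg qs D D) D = opzero"
  shows "D = opzero"
proof (rule herm_square_eq_zero[OF sD aD], rule herm_square_eq_zero)
  show "supported Sg qs (opmult Sg qs D D)" using sD by simp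
  show "adj (opmult Sg qs D D) = opmult Sg qs D D" by (simp add: adj_opmult aD)
  show "opmult Sg qs (opmult Sg qs D D) (opmult Sg qs D D) = opzero"
    by (metis D3 opmult_assoc opmult_zero_right)
qed

\<comment> \<open>With D = S - T and E = S + T, S S = T T gives E D = - D E, so tr (D E D) = - tr (D E D) = 0.
  As D E D = D S D + D T D is a sum of PSD operators, both summands vanish, hence so does
  D D D = D S D - D T D.\<close>
lemma sqrt_unique:
  fixes Sg :: "'v::finite \<Rightarrow> 'a::{finite,zero} set"
  assumes sS: "supported Sg qs S" and pS: "psd Sg qs S" and sT: "supported Sg qs T" and pT: "psd Sg qs T"
    and e: "eq_on Sg qs (opmult Sg qs S S) (opmult Sg qs T T)"
  shows "S = T"
proof -
  have aS: "adj S = S" using herm_adj sS pS by blast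
  have aT: "adj T = T" using herm_adj sT pT by blast
  have ST: "opmult Sg qs S S = opmult Sg qs T T" using supported_eq[OF _ _ e] sS sT by simp
  define D where "D = opdiff S T"
  define E where "E = opadd S T"
  have sD: "supported Sg qs D" unfolding D_def using sS sT by simp
  have aD: "adj D = D" unfolding D_def by (simp add: adj_opdiff aS aT)
  let ?DSD = "opmult Sg qs (opmult Sg qs D S) (adj D)" and ?DTD = "opmult Sg qs (opmult Sg qs D T) (adj D)"
  have DE: "opmult Sg qs D E = opdiff (opmult Sg qs S T) (opmult Sg qs T S)"
    unfolding D_def E_def by (simp add: opmult_diff_left opmult_add_right ST) (auto simp: opdiff_def opadd_def intro!: ext)
  have ED: "opmult Sg qs E D = opscale (-1) (opmult Sg qs D E)"
    unfolding DE unfolding D_def E_def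
    by (simp add: opmult_diff_right opmult_add_left ST) (auto simp: opdiff_def opadd_def opscale_def intro!: ext)
  have "tr Sg qs (opmult Sg qs (opmult Sg qs D E) D) = tr Sg qs (opmult Sg qs (opmult Sg qs E D) D)"
    using tr_cyclic[of Sg qs D "opmult Sg qs E D"] by (simp add: opmult_assoc)
  also have "\<dots> = - tr Sg qs (opmult Sg qs (opmult Sg qs D E) D)"
    unfolding ED opmult_opscale_left tr_opscale by simp
  finally have "tr Sg qs (opmult Sg qs (opmult Sg qs D E) D) = 0" by simp
  then have "tr Sg qs ?DSD + tr Sg qs ?DTD = 0"
    unfolding aD E_def by (simp add: opmult_add_right opmult_add_left tr_add)
  then have "tr Sg qs ?DSD = 0" "tr Sg qs ?DTD = 0"
    using psd_tr[OF psd_opmult_conj[OF pS, where K=D]] psd_tr[OF psd_opmult_conj[OF pT, where K=D]]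
    by (auto simp: complex_eq_iff)
  then have "?DSD = opzero" "?DTD = opzero"
    using sandwich_eq_zero_of_tr sD sS pS sT pT by blast+
  moreover have "opmult Sg qs (opmult Sg qs D D) D = opdiff ?DSD ?DTD"
    unfolding aD by (simp add: D_def[symmetric] opmult_diff_left[symmetric] opmult_diff_right[symmetric])
  ultimately have "opmult Sg qs (opmult Sg qs D D) D = opzero"
    by (simp add: opdiff_def opzero_def)
  then have "D = opzero" by (rule herm_cube_eq_zero[OF sD aD])
  then show ?thesis unfolding D_def by (auto simp: opdiff_def opzero_def fun_eq_iff)
qed

lemma opsqrt_props:
  fixes Sg :: "'v::finite \<Rightarrow> 'a::{finite,zero} set"
  assumes "psd Sg qs A" "loewner Sg qs A opId"
  shows "supported Sg qs (opsqrt Sg qs A) \<and> psd Sg qs (opsqrt Sg qs A) \<and>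
     (\<forall>x\<in>basis Sg qs. \<forall>y\<in>basis Sg qs. opmult Sg qs (opsqrt Sg qs A) (opsqrt Sg qs A) x y = A x y)"
proof -
  have "\<exists>!S. supported Sg qs S \<and> psd Sg qs S \<and> (\<forall>x\<in>basis Sg qs. \<forall>y\<in>basis Sg qs. opmult Sg qs S S x y = A x y)"
    using sqrt_exists[OF assms] sqrt_unique[of Sg qs] unfolding eq_on_def by metis
  then show ?thesis unfolding opsqrt_def by (rule theI')
qed

section \<open>Lifted operators and traces\<close>

definition agree_outside :: "'v set \<Rightarrow> ('v \<Rightarrow> 'a) \<Rightarrow> ('v \<Rightarrow> 'a) \<Rightarrow> bool" where
  "agree_outside qs x y \<longleftrightarrow> (\<forall>q. q \<notin> qs \<longrightarrow> x q = y q)"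

context fixes Sg :: "'v::finite \<Rightarrow> 'a::{finite,zero} set" begin

lemma lift_eq_agree_outside: "lift qs A x y = (if agree_outside qs x y then A (restr qs x) (restr qs y) else 0)"
  unfolding lift_def agree_outside_def ..

lemma restr_basis: "x \<in> basis Sg UNIV \<Longrightarrow> restr qs x \<in> basis Sg qs"
  unfolding basis_def restr_def by auto

lemma lift_mult: assumes x: "x \<in> basis Sg UNIV" and y: "y \<in> basis Sg UNIV"
  shows "opmult Sg UNIV (lift qs A) (lift qs B) x y = lift qs (opmult Sg qs A B) x y"
proof (cases "agree_outside qs x y")
  case False
  have z: "lift qs A x z * lift qs B z y = 0" for z
    using False unfolding lift_eq_agree_outside agree_outside_def by auto
  have "opmult Sg UNIV (lift qs A) (lift qs B) x y = 0" unfolding opmult_def by (rule sum.neutral) (use z in blast)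
  then show ?thesis using False unfolding lift_eq_agree_outside by simp
next
  case True
  let ?Z = "{z\<in>basis Sg UNIV. agree_outside qs x z}"
  let ?G = "\<lambda>z. lift qs A x z * lift qs B z y"
  define e where "e = (\<lambda>w q. if q \<in> qs then w q else x q)"
  have "opmult Sg UNIV (lift qs A) (lift qs B) x y = sum ?G (basis Sg UNIV)" unfolding opmult_def ..
  also have "\<dots> = sum ?G ?Z"
    by (rule sum.mono_neutral_right) (auto simp: lift_eq_agree_outside)
  also have "\<dots> = (\<Sum>w\<in>basis Sg qs. ?G (e w))"
  proof (rule sum.reindex_bij_betw[symmetric])
    show "bij_betw e (basis Sg qs) ?Z"
    proof (rule bij_betw_byWitness[where f' = "restr qs"])
      show "e ` basis Sg qs \<subseteq> ?Z" using x unfolding e_def basis_def agree_outside_def by auto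
      show "restr qs ` ?Z \<subseteq> basis Sg qs" using restr_basis by auto
      show "\<forall>w\<in>basis Sg qs. restr qs (e w) = w"
        unfolding e_def restr_def basis_def by (auto simp: fun_eq_iff)
      show "\<forall>z\<in>?Z. e (restr qs z) = z"
        unfolding e_def restr_def agree_outside_def by (auto simp: fun_eq_iff)
    qed
  qed
  also have "\<dots> = (\<Sum>w\<in>basis Sg qs. A (restr qs x) w * B w (restr qs y))"
  proof (rule sum.cong[OF refl])
    fix w assume w: "w \<in> basis Sg qs"
    have r: "restr qs (e w) = w" using w unfolding e_def restr_def basis_def by auto
    have a1: "agree_outside qs x (e w)" unfolding e_def agree_outside_def by auto
    have a2: "agree_outside qs (e w) y" using True unfolding e_def agree_outside_def by auto
    show "?G (e w) = A (restr qs x) w * B w (restr qs y)" using r a1 a2 unfolding lift_eq_agree_outside by simp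
  qed
  also have "\<dots> = lift qs (opmult Sg qs A B) x y" using True unfolding lift_eq_agree_outside opmult_def by simp
  finally show ?thesis .
qed

lemma eq_on_lift_mult: "eq_on Sg UNIV (opmult Sg UNIV (lift qs A) (lift qs B)) (lift qs (opmult Sg qs A B))"
  unfolding eq_on_def using lift_mult by blast

lemma adj_lift: "adj (lift qs A) = lift qs (adj A)"
  unfolding adj_def lift_eq_agree_outside agree_outside_def by (auto intro!: ext)

lemma lift_opId: "lift qs opId = opId"
  unfolding lift_eq_agree_outside opId_def agree_outside_def restr_def by (auto intro!: ext simp: fun_eq_iff)

lemma lift_opadd: "lift qs (opadd A B) = opadd (lift qs A) (lift qs B)"
  unfolding lift_eq_agree_outside opadd_def by (auto intro!: ext)

lemma lift_cong: "eq_on Sg qs A B \<Longrightarrow> eq_on Sg UNIV (lift qs A) (lift qs B)"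
  unfolding eq_on_def lift_eq_agree_outside using restr_basis by auto

lemma lift_sum_list: "lift qs (\<lambda>x y. sum_list (map (\<lambda>M. M x y) Ms)) = (\<lambda>x y. sum_list (map (\<lambda>M. lift qs M x y) Ms))"
  unfolding lift_eq_agree_outside by (induct Ms) (auto intro!: ext)

lemma lift_sum: "lift qs (\<lambda>a b. \<Sum>x\<in>S. F x a b) = (\<lambda>a b. \<Sum>x\<in>S. lift qs (F x) a b)"
  unfolding lift_eq_agree_outside by (auto intro!: ext)

lemma adj_opsqrt: assumes "psd Sg qs M" "loewner Sg qs M opId"
  shows "adj (opsqrt Sg qs M) = opsqrt Sg qs M"
  using opsqrt_props[OF assms] herm_adj by blast

lemma adj_lift_opsqrt: assumes "psd Sg qs M" "loewner Sg qs M opId"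
  shows "adj (lift qs (opsqrt Sg qs M)) = lift qs (opsqrt Sg qs M)"
  using adj_opsqrt[OF assms] adj_lift by metis

lemma lift_opsqrt_square: assumes "psd Sg qs M" "loewner Sg qs M opId"
  shows "eq_on Sg UNIV (opmult Sg UNIV (lift qs (opsqrt Sg qs M)) (lift qs (opsqrt Sg qs M))) (lift qs M)"
proof -
  have "eq_on Sg qs (opmult Sg qs (opsqrt Sg qs M) (opsqrt Sg qs M)) M"
    using opsqrt_props[OF assms] unfolding eq_on_def by blast
  then show ?thesis using eq_on_lift_mult lift_cong eq_on_trans by blast
qed

lemma trace_tr: "trace Sg A = tr Sg UNIV A" unfolding trace_def tr_def ..

lemma tr_sandwich_dual: "tr Sg UNIV (opmult Sg UNIV Q (sandwich Sg K \<rho>)) = tr Sg UNIV (opmult Sg UNIV (sandwich Sg (adj K) Q) \<rho>)"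
proof -
  have "tr Sg UNIV (opmult Sg UNIV Q (sandwich Sg K \<rho>)) =
     tr Sg UNIV (opmult Sg UNIV (opmult Sg UNIV (opmult Sg UNIV Q K) \<rho>) (adj K))"
    unfolding sandwich_def by (simp add: opmult_assoc)
  also have "\<dots> = tr Sg UNIV (opmult Sg UNIV (adj K) (opmult Sg UNIV (opmult Sg UNIV Q K) \<rho>))"
    by (rule tr_cyclic)
  also have "\<dots> = tr Sg UNIV (opmult Sg UNIV (sandwich Sg (adj K) Q) \<rho>)"
    unfolding sandwich_def by (simp add: opmult_assoc)
  finally show ?thesis .
qed

lemma psd_sandwich: "psd Sg UNIV M \<Longrightarrow> psd Sg UNIV (sandwich Sg K M)"
  unfolding sandwich_def by (rule psd_opmult_conj)

lemma tr_opmult_psd: assumes "psd Sg UNIV D" "loewner Sg UNIV D opId" "psd Sg UNIV \<rho>"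
  shows "Im (tr Sg UNIV (opmult Sg UNIV D \<rho>)) = 0 \<and> 0 \<le> Re (tr Sg UNIV (opmult Sg UNIV D \<rho>))"
proof -
  let ?S = "opsqrt Sg UNIV D"
  note p = opsqrt_props[OF assms(1,2)]
  have aS: "adj ?S = ?S" using p herm_adj by blast
  have e: "eq_on Sg UNIV (opmult Sg UNIV ?S ?S) D" using p unfolding eq_on_def by blast
  have "tr Sg UNIV (opmult Sg UNIV D \<rho>) = tr Sg UNIV (opmult Sg UNIV (opmult Sg UNIV ?S ?S) \<rho>)"
    by (rule tr_cong, rule opmult_cong[OF eq_on_sym[OF e] eq_on_refl])
  also have "\<dots> = tr Sg UNIV (opmult Sg UNIV ?S (opmult Sg UNIV ?S \<rho>))" by (simp add: opmult_assoc)
  also have "\<dots> = tr Sg UNIV (opmult Sg UNIV (opmult Sg UNIV ?S \<rho>) (adj ?S))" by (simp add: tr_cyclic aS)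
  finally show ?thesis using psd_tr[OF psd_opmult_conj[OF assms(3)]] by simp
qed

lemma loewner_of_tr_le:
  assumes h: "\<And>\<psi>. Im (quadform Sg UNIV P \<psi>) = 0" "\<And>\<psi>. Im (quadform Sg UNIV W \<psi>) = 0"
    and le: "\<And>\<rho>. pstate Sg \<rho> \<Longrightarrow> Re (tr Sg UNIV (opmult Sg UNIV P \<rho>)) \<le> Re (tr Sg UNIV (opmult Sg UNIV W \<rho>))"
  shows "loewner Sg UNIV P W"
  unfolding loewner_quadform
proof
  fix \<psi>
  let ?X = "basis Sg UNIV"
  define c :: real where "c = 1 / (1 + (\<Sum>x\<in>?X. (cmod (\<psi> x))\<^sup>2))"
  have n0: "0 \<le> (\<Sum>x\<in>?X. (cmod (\<psi> x))\<^sup>2)" by (simp add: sum_nonneg)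
  have c0: "0 < c" unfolding c_def using n0 by simp
  define \<rho> where "\<rho> = (\<lambda>x y. complex_of_real c * \<psi> x * cnj (\<psi> y))"
  have qr: "quadform Sg UNIV \<rho> \<phi> = complex_of_real c * ((\<Sum>x\<in>?X. cnj (\<phi> x) * \<psi> x) * cnj (\<Sum>x\<in>?X. cnj (\<phi> x) * \<psi> x))" for \<phi>
    unfolding quadform_def \<rho>_def by (simp add: sum_distrib_left sum_distrib_right algebra_simps)
  have qr2: "quadform Sg UNIV \<rho> \<phi> = complex_of_real (c * (cmod (\<Sum>x\<in>?X. cnj (\<phi> x) * \<psi> x))\<^sup>2)" for \<phi>
    unfolding qr by (metis complex_norm_square of_real_mult)
  have ps: "psd Sg UNIV \<rho>"
    unfolding psd_quadform qr2 using c0 by simp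
  have trr: "tr Sg UNIV \<rho> = complex_of_real (c * (\<Sum>x\<in>?X. (cmod (\<psi> x))\<^sup>2))"
    unfolding tr_def \<rho>_def by (simp add: sum_distrib_left mult.assoc complex_norm_square[symmetric])
  have "c * (\<Sum>x\<in>?X. (cmod (\<psi> x))\<^sup>2) \<le> 1" unfolding c_def using n0 by (simp add: field_simps)
  then have pst: "pstate Sg \<rho>" unfolding pstate_def trace_tr using ps trr by simp
  have trq: "tr Sg UNIV (opmult Sg UNIV A \<rho>) = complex_of_real c * quadform Sg UNIV A \<psi>" for A
    unfolding tr_def opmult_def \<rho>_def quadform_def
    by (simp add: sum_distrib_left algebra_simps)
  have "Re (complex_of_real c * quadform Sg UNIV P \<psi>) \<le> Re (complex_of_real c * quadform Sg UNIV W \<psi>)"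
    using le[OF pst] unfolding trq .
  then have "Re (quadform Sg UNIV P \<psi>) \<le> Re (quadform Sg UNIV W \<psi>)" using c0 by simp
  then show "Im (quadform Sg UNIV P \<psi>) = Im (quadform Sg UNIV W \<psi>) \<and> Re (quadform Sg UNIV P \<psi>) \<le> Re (quadform Sg UNIV W \<psi>)"
    using h by simp
qed

end

section \<open>Weakest preconditions\<close>

fun wp :: "('v \<Rightarrow> 'a set) \<Rightarrow> ('v,'a::zero) prog \<Rightarrow> ('v,'a) op \<Rightarrow> ('v,'a) op" where
  "wp Sg Skip Q = Q"
| "wp Sg (Init qs) Q = (\<lambda>a b. \<Sum>x\<in>basis Sg qs. sandwich Sg (adj (lift qs (ketbra0 x))) Q a b)"
| "wp Sg (Unit qs U) Q = sandwich Sg (adj (lift qs U)) Q"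
| "wp Sg (Seq S1 S2) Q = wp Sg S1 (wp Sg S2 Q)"
| "wp Sg (Repeat N S) Q = ((\<lambda>R. wp Sg S R) ^^ N) Q"
| "wp Sg (Case qs bs) Q = (\<lambda>a b. sum_list (map (\<lambda>b'. meas_map Sg qs (fst b') (wp Sg (snd b') Q) a b) bs))"
| "wp Sg (While qs B S) Q = opadd (meas_map Sg qs (opdiff opId B) Q)
     (meas_map Sg qs B (\<lambda>x y. lim (\<lambda>n. ((\<lambda>R. wp Sg S (opadd (meas_map Sg qs (opdiff opId B) Q) (meas_map Sg qs B R))) ^^ n) opzero x y)))"
| "wp Sg (Hole F) Q = opzero"

definition wp_sound :: "('v \<Rightarrow> 'a set) \<Rightarrow> ('v,'a::zero) prog \<Rightarrow> bool" where
  "wp_sound Sg S \<longleftrightarrow> (\<forall>Q. is_pred Sg Q \<longrightarrow> is_pred Sg (wp Sg S Q)) \<and>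
     (\<forall>Q \<rho>. is_pred Sg Q \<longrightarrow> psd Sg UNIV \<rho> \<longrightarrow>
        tr Sg UNIV (opmult Sg UNIV Q (denot Sg S \<rho>)) = tr Sg UNIV (opmult Sg UNIV (wp Sg S Q) \<rho>)) \<and>
     (\<forall>\<rho>. psd Sg UNIV \<rho> \<longrightarrow> psd Sg UNIV (denot Sg S \<rho>))"

context fixes Sg :: "'v::finite \<Rightarrow> 'a::{finite,zero} set" begin

lemma is_pred_iff: "is_pred Sg Q \<longleftrightarrow> psd Sg UNIV Q \<and> psd Sg UNIV (opdiff opId Q)"
  unfolding is_pred_def loewner_def by simp

lemma sandwich_diff: "sandwich Sg K (opdiff A B) = opdiff (sandwich Sg K A) (sandwich Sg K B)"
  unfolding sandwich_def by (simp add: opmult_diff_left opmult_diff_right)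

lemma sandwich_zero[simp]: "sandwich Sg K opzero = opzero"
  unfolding sandwich_def by simp

lemma sandwich_opId: "eq_on Sg UNIV (sandwich Sg K opId) (opmult Sg UNIV K (adj K))"
  unfolding sandwich_def by (rule opmult_cong[OF eq_on_opId_right eq_on_refl])

lemma psd_eq_on: "eq_on Sg qs A B \<Longrightarrow> psd Sg qs B \<Longrightarrow> psd Sg qs A"
  using psd_cong by blast

lemma Im_quadform_pred: "is_pred Sg Q \<Longrightarrow> Im (quadform Sg UNIV Q \<psi>) = 0"
  unfolding is_pred_iff psd_quadform by blast

lemma tr_opmult_mono: assumes "is_pred Sg Q" "is_pred Sg Q'" "loewner Sg UNIV Q Q'" "psd Sg UNIV \<sigma>"
  shows "Re (tr Sg UNIV (opmult Sg UNIV Q \<sigma>)) \<le> Re (tr Sg UNIV (opmult Sg UNIV Q' \<sigma>))"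
proof -
  have p: "psd Sg UNIV (opdiff Q' Q)" using assms(3) unfolding loewner_def .
  have e: "eq_on Sg UNIV (opdiff opId (opdiff Q' Q)) (opadd (opdiff opId Q') Q)"
    unfolding eq_on_def opdiff_def opadd_def by simp
  have "psd Sg UNIV (opadd (opdiff opId Q') Q)" using psd_add assms(1,2) unfolding is_pred_iff by blast
  then have l: "loewner Sg UNIV (opdiff Q' Q) opId" unfolding loewner_def using psd_eq_on[OF e] by blast
  have "0 \<le> Re (tr Sg UNIV (opmult Sg UNIV (opdiff Q' Q) \<sigma>))" using tr_opmult_psd[OF p l assms(4)] by blast
  then show ?thesis by (simp add: opmult_diff_left tr_diff)
qed

lemma wp_sound_pred: "wp_sound Sg S \<Longrightarrow> is_pred Sg Q \<Longrightarrow> is_pred Sg (wp Sg S Q)"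
  unfolding wp_sound_def by blast
lemma wp_sound_dual: "wp_sound Sg S \<Longrightarrow> is_pred Sg Q \<Longrightarrow> psd Sg UNIV \<rho> \<Longrightarrow>
   tr Sg UNIV (opmult Sg UNIV Q (denot Sg S \<rho>)) = tr Sg UNIV (opmult Sg UNIV (wp Sg S Q) \<rho>)"
  unfolding wp_sound_def by blast
lemma wp_sound_psd: "wp_sound Sg S \<Longrightarrow> psd Sg UNIV \<rho> \<Longrightarrow> psd Sg UNIV (denot Sg S \<rho>)"
  unfolding wp_sound_def by blast

lemma wp_sound_mono: assumes s: "wp_sound Sg S" and q: "is_pred Sg Q" "is_pred Sg Q'" "loewner Sg UNIV Q Q'"
  shows "loewner Sg UNIV (wp Sg S Q) (wp Sg S Q')"
proof (rule loewner_of_tr_le)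
  show "Im (quadform Sg UNIV (wp Sg S Q) \<psi>) = 0" "Im (quadform Sg UNIV (wp Sg S Q') \<psi>) = 0" for \<psi>
    using Im_quadform_pred wp_sound_pred[OF s] q by blast+
  fix \<rho> assume "pstate Sg \<rho>"
  then have p: "psd Sg UNIV \<rho>" unfolding pstate_def by blast
  have "Re (tr Sg UNIV (opmult Sg UNIV Q (denot Sg S \<rho>))) \<le> Re (tr Sg UNIV (opmult Sg UNIV Q' (denot Sg S \<rho>)))"
    by (rule tr_opmult_mono[OF q wp_sound_psd[OF s p]])
  then show "Re (tr Sg UNIV (opmult Sg UNIV (wp Sg S Q) \<rho>)) \<le> Re (tr Sg UNIV (opmult Sg UNIV (wp Sg S Q') \<rho>))"
    unfolding wp_sound_dual[OF s q(1) p] wp_sound_dual[OF s q(2) p] .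
qed

lemma wp_sound_Skip: "wp_sound Sg Skip" unfolding wp_sound_def by simp

lemma wp_sound_Seq: "wp_sound Sg S1 \<Longrightarrow> wp_sound Sg S2 \<Longrightarrow> wp_sound Sg (Seq S1 S2)"
  unfolding wp_sound_def by simp

lemma wp_sound_Repeat: "wp_sound Sg S \<Longrightarrow> wp_sound Sg (Repeat N S)"
proof (induct N)
  case 0
  then show ?case unfolding wp_sound_def by simp
next
  case (Suc N)
  have "wp_sound Sg (Seq (Repeat N S) S)" by (rule wp_sound_Seq[OF Suc(1)[OF Suc(2)] Suc(2)])
  moreover have "denot Sg (Repeat (Suc N) S) = denot Sg (Seq (Repeat N S) S)"
    by (simp add: funpow_Suc_right)
  moreover have "wp Sg (Repeat (Suc N) S) = wp Sg (Seq (Repeat N S) S)"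
    by (rule ext, simp only: wp.simps funpow_Suc_right comp_def)
  ultimately show ?case unfolding wp_sound_def by metis
qed

lemma unitary_adj: "unitary Sg qs U \<Longrightarrow> eq_on Sg qs (opmult Sg qs (adj U) U) opId"
  unfolding unitary_def eq_on_def by blast

lemma wp_sound_Unit: assumes u: "unitary Sg qs U" shows "wp_sound Sg (Unit qs U)"
proof -
  let ?L = "adj (lift qs U)"
  have e1: "eq_on Sg UNIV (sandwich Sg ?L opId) opId"
  proof -
    have "eq_on Sg UNIV (sandwich Sg ?L opId) (opmult Sg UNIV ?L (adj ?L))" by (rule sandwich_opId)
    moreover have "opmult Sg UNIV ?L (adj ?L) = opmult Sg UNIV (lift qs (adj U)) (lift qs U)" by (simp add: adj_lift)
    moreover have "eq_on Sg UNIV (opmult Sg UNIV (lift qs (adj U)) (lift qs U)) (lift qs (opmult Sg qs (adj U) U))"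
      by (rule eq_on_lift_mult)
    moreover have "eq_on Sg UNIV (lift qs (opmult Sg qs (adj U) U)) opId"
      using lift_cong[OF unitary_adj[OF u]] lift_opId by metis
    ultimately show ?thesis using eq_on_trans by metis
  qed
  have pr: "is_pred Sg (sandwich Sg ?L Q)" if "is_pred Sg Q" for Q
  proof -
    have "eq_on Sg UNIV (opdiff opId (sandwich Sg ?L Q)) (sandwich Sg ?L (opdiff opId Q))"
      using e1 unfolding sandwich_diff by (simp add: eq_on_def opdiff_def)
    then show ?thesis using that unfolding is_pred_iff by (meson psd_eq_on psd_sandwich)
  qed
  show ?thesis unfolding wp_sound_def denot.simps wp.simps
    using pr tr_sandwich_dual psd_sandwich by blast
qed

end

context fixes Sg :: "'v::finite \<Rightarrow> 'a::{finite,zero} set" begin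

lemma adj_ketbra0_mult: assumes z: "\<forall>q. 0 \<in> Sg q"
  shows "eq_on Sg qs (opmult Sg qs (adj (ketbra0 x)) (ketbra0 x)) (\<lambda>a b. if a = x \<and> b = x then 1 else 0)"
proof -
  have z0: "(\<lambda>q. 0) \<in> basis Sg qs" using z unfolding basis_def by auto
  have "opmult Sg qs (adj (ketbra0 x)) (ketbra0 x) a b = (if a = x \<and> b = x then 1 else 0)" for a b
  proof -
    have "opmult Sg qs (adj (ketbra0 x)) (ketbra0 x) a b =
       (\<Sum>w\<in>basis Sg qs. if w = (\<lambda>q. 0) then (if a = x \<and> b = x then 1 else 0) else 0)"
      unfolding opmult_def adj_def ketbra0_def by (intro sum.cong refl) simp
    also have "\<dots> = (if a = x \<and> b = x then 1 else 0)" using z0 by (simp add: sum.delta')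
    finally show ?thesis .
  qed
  then show ?thesis unfolding eq_on_def by simp
qed

lemma sum_init_kraus_opId: assumes z: "\<forall>q. 0 \<in> Sg q"
  shows "eq_on Sg UNIV (\<lambda>a b. \<Sum>x\<in>basis Sg qs. sandwich Sg (adj (lift qs (ketbra0 x))) opId a b) opId"
proof -
  let ?P = "\<lambda>x. (\<lambda>a b. if a = x \<and> b = x then 1 else 0) :: ('v,'a) op"
  have step: "eq_on Sg UNIV (sandwich Sg (adj (lift qs (ketbra0 x))) opId) (lift qs (?P x))" for x
  proof -
    have a: "eq_on Sg UNIV (sandwich Sg (adj (lift qs (ketbra0 x))) opId)
        (opmult Sg UNIV (lift qs (adj (ketbra0 x))) (lift qs (ketbra0 x)))"
      using sandwich_opId[where K="adj (lift qs (ketbra0 x))"] unfolding adj_adj adj_lift .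
    have b: "eq_on Sg UNIV (opmult Sg UNIV (lift qs (adj (ketbra0 x))) (lift qs (ketbra0 x)))
        (lift qs (opmult Sg qs (adj (ketbra0 x)) (ketbra0 x)))" by (rule eq_on_lift_mult)
    have c: "eq_on Sg UNIV (lift qs (opmult Sg qs (adj (ketbra0 x)) (ketbra0 x))) (lift qs (?P x))"
      by (rule lift_cong[OF adj_ketbra0_mult[OF z]])
    show ?thesis by (rule eq_on_trans[OF eq_on_trans[OF a b] c])
  qed
  have a: "eq_on Sg UNIV (\<lambda>a b. \<Sum>x\<in>basis Sg qs. sandwich Sg (adj (lift qs (ketbra0 x))) opId a b)
     (\<lambda>a b. \<Sum>x\<in>basis Sg qs. lift qs (?P x) a b)" by (rule eq_on_sum[OF step])
  have b: "(\<lambda>a b. \<Sum>x\<in>basis Sg qs. lift qs (?P x) a b) = lift qs (\<lambda>a b. \<Sum>x\<in>basis Sg qs. ?P x a b)"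
    by (rule lift_sum[symmetric])
  have c: "eq_on Sg qs (\<lambda>a b. \<Sum>x\<in>basis Sg qs. ?P x a b) opId"
    unfolding eq_on_def opId_def
  proof (intro ballI)
    fix a b assume a: "a \<in> basis Sg qs" and b: "b \<in> basis Sg qs"
    have "(\<Sum>x\<in>basis Sg qs. ?P x a b) = (\<Sum>x\<in>basis Sg qs. if x = a then (if a = b then 1 else 0) else 0)"
      by (intro sum.cong refl) auto
    also have "\<dots> = (if a = b then 1 else 0)" using a by (simp add: sum.delta')
    finally show "(\<Sum>x\<in>basis Sg qs. ?P x a b) = (if a = b then 1 else 0)" .
  qed
  have d: "eq_on Sg UNIV (lift qs (\<lambda>a b. \<Sum>x\<in>basis Sg qs. ?P x a b)) opId"
    using lift_cong[OF c] unfolding lift_opId .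
  show ?thesis using eq_on_trans[OF a[unfolded b] d] .
qed

lemma wp_sound_Init: assumes z: "\<forall>q. 0 \<in> Sg q" shows "wp_sound Sg (Init qs)"
proof -
  let ?L = "\<lambda>x. lift qs (ketbra0 x)"
  have dual: "tr Sg UNIV (opmult Sg UNIV Q (denot Sg (Init qs) \<rho>)) = tr Sg UNIV (opmult Sg UNIV (wp Sg (Init qs) Q) \<rho>)" for Q \<rho>
    unfolding denot.simps wp.simps opmult_sum_right opmult_sum_left tr_sum
    by (intro sum.cong refl tr_sandwich_dual)
  have ps: "psd Sg UNIV (denot Sg (Init qs) \<rho>)" if "psd Sg UNIV \<rho>" for \<rho>
    unfolding denot.simps by (intro psd_sum psd_sandwich that)
  have pr: "is_pred Sg (wp Sg (Init qs) Q)" if q: "is_pred Sg Q" for Q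
  proof -
    have p1: "psd Sg UNIV (wp Sg (Init qs) Q)"
      unfolding wp.simps using q unfolding is_pred_iff by (intro psd_sum psd_sandwich) blast
    have e: "eq_on Sg UNIV (opdiff opId (wp Sg (Init qs) Q))
       (\<lambda>a b. \<Sum>x\<in>basis Sg qs. sandwich Sg (adj (?L x)) (opdiff opId Q) a b)"
      using sum_init_kraus_opId[OF z, of qs] unfolding wp.simps sandwich_diff opdiff_sum[symmetric]
      by (simp add: eq_on_def opdiff_def)
    have p2: "psd Sg UNIV (\<lambda>a b. \<Sum>x\<in>basis Sg qs. sandwich Sg (adj (?L x)) (opdiff opId Q) a b)"
      using q unfolding is_pred_iff by (intro psd_sum psd_sandwich) blast
    show ?thesis unfolding is_pred_iff using p1 psd_eq_on[OF e p2] by blast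
  qed
  show ?thesis unfolding wp_sound_def using dual ps pr by blast
qed

lemma psd_sum_list_minus: "(\<forall>N\<in>set Ms. psd Sg qs N) \<Longrightarrow> M \<in> set Ms \<Longrightarrow>
   psd Sg qs (\<lambda>x y. sum_list (map (\<lambda>N. N x y) Ms) - M x y)"
proof (induct Ms)
  case Nil
  then show ?case by simp
next
  case (Cons N Ns)
  show ?case
  proof (cases "M = N")
    case True
    have "(\<lambda>x y. sum_list (map (\<lambda>N. N x y) (N # Ns)) - M x y) = (\<lambda>x y. sum_list (map (\<lambda>N. N x y) Ns))"
      using True by simp
    moreover have "psd Sg qs (\<lambda>x y. sum_list (map (\<lambda>N. N x y) Ns))" using Cons(2) by (intro psd_sum_list) auto
    ultimately show ?thesis by simp
  next
    case False
    then have "M \<in> set Ns" using Cons(3) by simp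
    then have p: "psd Sg qs (\<lambda>x y. sum_list (map (\<lambda>N. N x y) Ns) - M x y)" using Cons by simp
    have "(\<lambda>x y. sum_list (map (\<lambda>N. N x y) (N # Ns)) - M x y) = opadd N (\<lambda>x y. sum_list (map (\<lambda>N. N x y) Ns) - M x y)"
      unfolding opadd_def by (simp add: algebra_simps)
    then show ?thesis using psd_add[OF _ p] Cons(2) by simp
  qed
qed

lemma measurement_le_opId: assumes m: "measurement Sg qs Ms" and M: "M \<in> set Ms" shows "loewner Sg qs M opId"
proof -
  have p: "psd Sg qs (\<lambda>x y. sum_list (map (\<lambda>N. N x y) Ms) - M x y)"
    using m M psd_sum_list_minus unfolding measurement_def by blast
  have "eq_on Sg qs (opdiff opId M) (\<lambda>x y. sum_list (map (\<lambda>N. N x y) Ms) - M x y)"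
    using m unfolding measurement_def eq_on_def opdiff_def by simp
  then show ?thesis unfolding loewner_def using psd_eq_on p by blast
qed

lemma measurement_psd: "measurement Sg qs Ms \<Longrightarrow> M \<in> set Ms \<Longrightarrow> psd Sg qs M"
  unfolding measurement_def by blast

lemma meas_map_opId: assumes "psd Sg qs M" "loewner Sg qs M opId"
  shows "eq_on Sg UNIV (meas_map Sg qs M opId) (lift qs M)"
proof -
  have a: "eq_on Sg UNIV (meas_map Sg qs M opId) (opmult Sg UNIV (lift qs (opsqrt Sg qs M)) (lift qs (opsqrt Sg qs M)))"
    unfolding meas_map_def using sandwich_opId[where K="lift qs (opsqrt Sg qs M)"] unfolding adj_lift_opsqrt[OF assms] .
  show ?thesis by (rule eq_on_trans[OF a lift_opsqrt_square[OF assms]])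
qed

lemma sum_meas_map_opId: assumes m: "measurement Sg qs (map fst bs)"
  shows "eq_on Sg UNIV (\<lambda>a b. sum_list (map (\<lambda>b'. meas_map Sg qs (fst b') opId a b) bs)) opId"
proof -
  have a: "eq_on Sg UNIV (\<lambda>a b. sum_list (map (\<lambda>b'. meas_map Sg qs (fst b') opId a b) bs))
      (\<lambda>a b. sum_list (map (\<lambda>b'. lift qs (fst b') a b) bs))"
  proof (rule eq_on_sum_list)
    fix b' assume "b' \<in> set bs"
    then have "fst b' \<in> set (map fst bs)" by simp
    then show "eq_on Sg UNIV (meas_map Sg qs (fst b') opId) (lift qs (fst b'))"
      using meas_map_opId measurement_le_opId[OF m] measurement_psd[OF m] by blast
  qed
  have b: "(\<lambda>a b. sum_list (map (\<lambda>b'. lift qs (fst b') a b) bs)) = lift qs (\<lambda>x y. sum_list (map (\<lambda>M. M x y) (map fst bs)))"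
    unfolding lift_sum_list by (simp add: comp_def)
  have c: "eq_on Sg qs (\<lambda>x y. sum_list (map (\<lambda>M. M x y) (map fst bs))) opId"
    using m unfolding measurement_def eq_on_def by blast
  have d: "eq_on Sg UNIV (lift qs (\<lambda>x y. sum_list (map (\<lambda>M. M x y) (map fst bs)))) opId"
    using lift_cong[OF c] unfolding lift_opId .
  show ?thesis using eq_on_trans[OF a[unfolded b] d] .
qed

lemma psd_meas_map: "psd Sg UNIV \<rho> \<Longrightarrow> psd Sg UNIV (meas_map Sg qs M \<rho>)"
  unfolding meas_map_def by (rule psd_sandwich)

lemma tr_meas_map_dual: assumes "psd Sg qs M" "loewner Sg qs M opId"
  shows "tr Sg UNIV (opmult Sg UNIV Q (meas_map Sg qs M \<rho>)) = tr Sg UNIV (opmult Sg UNIV (meas_map Sg qs M Q) \<rho>)"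
  unfolding meas_map_def using tr_sandwich_dual[where K="lift qs (opsqrt Sg qs M)"] unfolding adj_lift_opsqrt[OF assms] .

lemma wp_sound_Case: assumes m: "measurement Sg qs (map fst bs)" and s: "\<forall>b\<in>set bs. wp_sound Sg (snd b)"
  shows "wp_sound Sg (Case qs bs)"
proof -
  have Mp: "psd Sg qs (fst b)" "loewner Sg qs (fst b) opId" if "b \<in> set bs" for b
    using that measurement_le_opId[OF m] measurement_psd[OF m] by auto
  have dual: "tr Sg UNIV (opmult Sg UNIV Q (denot Sg (Case qs bs) \<rho>)) = tr Sg UNIV (opmult Sg UNIV (wp Sg (Case qs bs) Q) \<rho>)"
    if q: "is_pred Sg Q" and r: "psd Sg UNIV \<rho>" for Q \<rho>
  proof -
    have "tr Sg UNIV (opmult Sg UNIV Q (denot Sg (snd b) (meas_map Sg qs (fst b) \<rho>))) =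
          tr Sg UNIV (opmult Sg UNIV (meas_map Sg qs (fst b) (wp Sg (snd b) Q)) \<rho>)" if b: "b \<in> set bs" for b
      using wp_sound_dual[OF bspec[OF s b] q psd_meas_map[OF r]] tr_meas_map_dual[OF Mp[OF b]] by simp
    then show ?thesis
      unfolding denot.simps wp.simps opmult_sum_list_right opmult_sum_list_left tr_sum_list
      by (intro arg_cong[where f = sum_list] map_cong refl) blast
  qed
  have ps: "psd Sg UNIV (denot Sg (Case qs bs) \<rho>)" if "psd Sg UNIV \<rho>" for \<rho>
    unfolding denot.simps by (intro psd_sum_list wp_sound_psd psd_meas_map that) (use s in blast)
  have pr: "is_pred Sg (wp Sg (Case qs bs) Q)" if q: "is_pred Sg Q" for Q
  proof -
    have oppow: "is_pred Sg (wp Sg (snd b) Q)" if "b \<in> set bs" for b using wp_sound_pred s that q by blast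
    have p1: "psd Sg UNIV (wp Sg (Case qs bs) Q)"
      unfolding wp.simps meas_map_def using oppow unfolding is_pred_iff by (intro psd_sum_list psd_sandwich) blast
    have e: "eq_on Sg UNIV (opdiff opId (wp Sg (Case qs bs) Q))
       (\<lambda>a b. sum_list (map (\<lambda>b'. meas_map Sg qs (fst b') (opdiff opId (wp Sg (snd b') Q)) a b) bs))"
      using sum_meas_map_opId[OF m] unfolding wp.simps meas_map_def sandwich_diff opdiff_sum_list[symmetric]
      by (simp add: eq_on_def opdiff_def)
    have p2: "psd Sg UNIV (\<lambda>a b. sum_list (map (\<lambda>b'. meas_map Sg qs (fst b') (opdiff opId (wp Sg (snd b') Q)) a b) bs))"
      unfolding meas_map_def using oppow unfolding is_pred_iff by (intro psd_sum_list psd_sandwich) blast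
    show ?thesis unfolding is_pred_iff using p1 psd_eq_on[OF e p2] by blast
  qed
  show ?thesis unfolding wp_sound_def using dual ps pr by blast
qed

end

definition while_approx :: "('v \<Rightarrow> 'a set) \<Rightarrow> 'v set \<Rightarrow> ('v,'a::zero) op \<Rightarrow> ('v,'a) prog \<Rightarrow> ('v,'a) op \<Rightarrow> nat \<Rightarrow> ('v,'a) op" where
  "while_approx Sg qs B S Q n = ((\<lambda>R. wp Sg S (opadd (meas_map Sg qs (opdiff opId B) Q) (meas_map Sg qs B R))) ^^ n) opzero"

definition while_lim :: "('v \<Rightarrow> 'a set) \<Rightarrow> 'v set \<Rightarrow> ('v,'a::zero) op \<Rightarrow> ('v,'a) prog \<Rightarrow> ('v,'a) op \<Rightarrow> ('v,'a) op" where
  "while_lim Sg qs B S Q = (\<lambda>x y. lim (\<lambda>n. while_approx Sg qs B S Q n x y))"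

lemma wp_While: "wp Sg (While qs B S) Q = opadd (meas_map Sg qs (opdiff opId B) Q) (meas_map Sg qs B (while_lim Sg qs B S Q))"
  unfolding while_lim_def while_approx_def by simp

lemma while_approx_0[simp]: "while_approx Sg qs B S Q 0 = opzero"
  unfolding while_approx_def by simp

lemma while_approx_Suc: "while_approx Sg qs B S Q (Suc n) =
    wp Sg S (opadd (meas_map Sg qs (opdiff opId B) Q) (meas_map Sg qs B (while_approx Sg qs B S Q n)))"
  unfolding while_approx_def by simp

context fixes Sg :: "'v::finite \<Rightarrow> 'a::{finite,zero} set" begin

lemma tr_opmult_sums:
  assumes "\<forall>a\<in>basis Sg qs. \<forall>b\<in>basis Sg qs. (\<lambda>k. Z k a b) sums D a b"
  shows "(\<lambda>k. tr Sg qs (opmult Sg qs Q (Z k))) sums tr Sg qs (opmult Sg qs Q D)"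
  unfolding tr_def opmult_def using assms by (intro sums_sum sums_mult) auto

lemma quadform_sums:
  assumes "\<forall>a\<in>basis Sg qs. \<forall>b\<in>basis Sg qs. (\<lambda>k. Z k a b) sums D a b"
  shows "(\<lambda>k. quadform Sg qs (Z k) \<psi>) sums quadform Sg qs D \<psi>"
  unfolding quadform_def using assms by (intro sums_sum sums_mult sums_mult2) auto

lemma psd_sums:
  assumes "\<forall>a\<in>basis Sg qs. \<forall>b\<in>basis Sg qs. (\<lambda>k. Z k a b) sums D a b" and p: "\<And>k. psd Sg qs (Z k)"
  shows "psd Sg qs D"
  unfolding psd_quadform
proof
  fix \<psi>
  have s: "(\<lambda>k. quadform Sg qs (Z k) \<psi>) sums quadform Sg qs D \<psi>" by (rule quadform_sums[OF assms(1)])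
  have z: "\<And>k. Im (quadform Sg qs (Z k) \<psi>) = 0" "\<And>k. 0 \<le> Re (quadform Sg qs (Z k) \<psi>)" using p unfolding psd_quadform by blast+
  have "(\<lambda>k. Im (quadform Sg qs (Z k) \<psi>)) sums Im (quadform Sg qs D \<psi>)" by (rule sums_Im[OF s])
  then have 1: "Im (quadform Sg qs D \<psi>) = 0" unfolding z using sums_zero sums_unique2 by blast
  have "(\<lambda>k. Re (quadform Sg qs (Z k) \<psi>)) sums Re (quadform Sg qs D \<psi>)" by (rule sums_Re[OF s])
  then have 2: "0 \<le> Re (quadform Sg qs D \<psi>)" using sums_le[of "\<lambda>k. 0" "\<lambda>k. Re (quadform Sg qs (Z k) \<psi>)", OF z(2) sums_zero] by blast
  show "Im (quadform Sg qs D \<psi>) = 0 \<and> 0 \<le> Re (quadform Sg qs D \<psi>)" using 1 2 by simp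
qed

lemma tr_opmult_tendsto:
  assumes "\<forall>x\<in>basis Sg qs. \<forall>y\<in>basis Sg qs. (\<lambda>n. A n x y) \<longlonglongrightarrow> W x y"
  shows "(\<lambda>n. tr Sg qs (opmult Sg qs (A n) \<rho>)) \<longlonglongrightarrow> tr Sg qs (opmult Sg qs W \<rho>)"
  unfolding tr_def opmult_def using assms by (auto intro!: tendsto_sum tendsto_mult)

lemma meas_map_tendsto:
  assumes "\<forall>x\<in>basis Sg UNIV. \<forall>y\<in>basis Sg UNIV. (\<lambda>n. R n x y) \<longlonglongrightarrow> L x y"
  shows "\<forall>x\<in>basis Sg UNIV. \<forall>y\<in>basis Sg UNIV. (\<lambda>n. meas_map Sg qs M (R n) x y) \<longlonglongrightarrow> meas_map Sg qs M L x y"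
proof (intro ballI)
  fix x y assume x: "x \<in> basis Sg UNIV" and y: "y \<in> basis Sg UNIV"
  let ?K = "lift qs (opsqrt Sg qs M)"
  have c: "\<forall>x\<in>basis Sg UNIV. \<forall>y\<in>basis Sg UNIV. (\<lambda>n. ?K x y) \<longlonglongrightarrow> ?K x y" by simp
  have c2: "\<forall>x\<in>basis Sg UNIV. \<forall>y\<in>basis Sg UNIV. (\<lambda>n. adj ?K x y) \<longlonglongrightarrow> adj ?K x y" by simp
  have a: "\<forall>x\<in>basis Sg UNIV. \<forall>y\<in>basis Sg UNIV. (\<lambda>n. opmult Sg UNIV ?K (R n) x y) \<longlonglongrightarrow> opmult Sg UNIV ?K L x y"
    using opmult_tendsto[OF c assms] by blast
  show "(\<lambda>n. meas_map Sg qs M (R n) x y) \<longlonglongrightarrow> meas_map Sg qs M L x y"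
    unfolding meas_map_def sandwich_def by (rule opmult_tendsto[OF a c2 x y])
qed

lemma diag_le_tr: assumes "psd Sg qs A" "a \<in> basis Sg qs" shows "Re (A a a) \<le> Re (tr Sg qs A)"
proof -
  have "Re (A a a) \<le> (\<Sum>x\<in>basis Sg qs. Re (A x x))"
    by (rule member_le_sum[OF assms(2)]) (use psd_diag[OF assms(1)] in auto)
  then show ?thesis unfolding tr_def by (simp add: Re_sum)
qed

lemma entry_le_tr: assumes "psd Sg qs A" "a \<in> basis Sg qs" "b \<in> basis Sg qs" shows "cmod (A a b) \<le> Re (tr Sg qs A)"
  using psd_entry[OF assms] diag_le_tr[OF assms(1,2)] diag_le_tr[OF assms(1,3)] by simp

lemma pred_opId: "is_pred Sg opId"
  unfolding is_pred_iff using psd_opId by (simp add: opdiff_def psd_zero[unfolded opzero_def])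

end

context
  fixes Sg :: "'v::finite \<Rightarrow> 'a::{finite,zero} set" and qs :: "'v set" and B :: "('v,'a) op" and S :: "('v,'a) prog"
  assumes bm: "binmeas Sg qs B" and sS: "wp_sound Sg S"
begin

abbreviation "B0 \<equiv> meas_map Sg qs (opdiff opId B)"
abbreviation "B1 \<equiv> meas_map Sg qs B"

lemma psd_B: "psd Sg qs B" using bm unfolding binmeas_def by (simp add: psd_loewner)
lemma B_le_opId: "loewner Sg qs B opId" using bm unfolding binmeas_def by simp
lemma psd_compl_B: "psd Sg qs (opdiff opId B)" using B_le_opId unfolding loewner_def .
lemma compl_B_le_opId: "loewner Sg qs (opdiff opId B) opId"
proof -
  have "eq_on Sg qs (opdiff opId (opdiff opId B)) B" unfolding eq_on_def opdiff_def by simp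
  then show ?thesis unfolding loewner_def using psd_eq_on psd_B by blast
qed

lemma while_branches_opId: "eq_on Sg UNIV (opadd (B0 opId) (B1 opId)) opId"
proof -
  have a: "eq_on Sg UNIV (opadd (B0 opId) (B1 opId)) (opadd (lift qs (opdiff opId B)) (lift qs B))"
    using meas_map_opId[OF psd_compl_B compl_B_le_opId] meas_map_opId[OF psd_B B_le_opId] unfolding eq_on_def opadd_def by simp
  have b: "opadd (lift qs (opdiff opId B)) (lift qs B) = lift qs opId"
    unfolding lift_opadd[symmetric] by (rule arg_cong[where f="lift qs"]) (simp add: opadd_def opdiff_def)
  show ?thesis using a unfolding b lift_opId .
qed

lemma pred_while_branches: assumes q: "is_pred Sg Q" and r: "is_pred Sg R" shows "is_pred Sg (opadd (B0 Q) (B1 R))"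
proof -
  have p1: "psd Sg UNIV (opadd (B0 Q) (B1 R))"
    using q r unfolding is_pred_iff meas_map_def by (intro psd_add psd_sandwich) blast+
  have e: "eq_on Sg UNIV (opdiff opId (opadd (B0 Q) (B1 R))) (opadd (B0 (opdiff opId Q)) (B1 (opdiff opId R)))"
    using while_branches_opId unfolding meas_map_def sandwich_diff by (simp add: eq_on_def opdiff_def opadd_def algebra_simps)
  have p2: "psd Sg UNIV (opadd (B0 (opdiff opId Q)) (B1 (opdiff opId R)))"
    using q r unfolding is_pred_iff meas_map_def by (intro psd_add psd_sandwich) blast+
  show ?thesis unfolding is_pred_iff using p1 psd_eq_on[OF e p2] by blast
qed

lemma meas_map_mono: "loewner Sg UNIV R R' \<Longrightarrow> loewner Sg UNIV (meas_map Sg qs M R) (meas_map Sg qs M R')"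
  unfolding loewner_def meas_map_def sandwich_diff[symmetric] by (rule psd_sandwich)

lemma opadd_mono: "loewner Sg UNIV A A' \<Longrightarrow> loewner Sg UNIV (opadd C A) (opadd C A')"
proof -
  assume "loewner Sg UNIV A A'"
  moreover have "opdiff (opadd C A') (opadd C A) = opdiff A' A" unfolding opdiff_def opadd_def by simp
  ultimately show ?thesis unfolding loewner_def by simp
qed

lemma psd_loop_iter: "psd Sg UNIV \<rho> \<Longrightarrow> psd Sg UNIV (((denot Sg S \<circ> B1) ^^ k) \<rho>)"
  by (induct k) (simp_all add: wp_sound_psd[OF sS] psd_meas_map)

context fixes Q assumes q: "is_pred Sg Q"
begin

lemma while_approx_pred: "is_pred Sg (while_approx Sg qs B S Q n)"
proof (induct n)
  case 0
  show ?case using psd_opId unfolding is_pred_iff by simp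
next
  case (Suc n)
  then show ?case unfolding while_approx_Suc by (intro wp_sound_pred[OF sS] pred_while_branches q)
qed

lemma while_approx_mono: "loewner Sg UNIV (while_approx Sg qs B S Q n) (while_approx Sg qs B S Q (Suc n))"
proof (induct n)
  case 0
  show ?case using while_approx_pred[of "Suc 0"] unfolding is_pred_def by simp
next
  case (Suc n)
  then show ?case unfolding while_approx_Suc[of _ _ _ _ _ "Suc n"] while_approx_Suc[of _ _ _ _ _ n]
    by (intro wp_sound_mono[OF sS] pred_while_branches q while_approx_pred opadd_mono meas_map_mono
        while_approx_pred[of "Suc n", unfolded while_approx_Suc])
      (simp add: while_approx_Suc)
qed

lemma while_approx_tendsto:
  "\<forall>x\<in>basis Sg UNIV. \<forall>y\<in>basis Sg UNIV. (\<lambda>n. while_approx Sg qs B S Q n x y) \<longlonglongrightarrow> while_lim Sg qs B S Q x y"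
  unfolding while_lim_def
  by (rule mono_bounded_tendsto[where R="\<lambda>n. while_approx Sg qs B S Q n" and B=opId, OF while_approx_mono])
     (use while_approx_pred in \<open>auto simp: is_pred_def\<close>)

lemma pred_while_lim: "is_pred Sg (while_lim Sg qs B S Q)"
proof -
  have "psd Sg UNIV (while_lim Sg qs B S Q)"
    by (rule psd_tendsto[OF while_approx_tendsto]) (use while_approx_pred in \<open>auto simp: is_pred_iff\<close>)
  moreover have "loewner Sg UNIV (while_lim Sg qs B S Q) opId"
    by (rule loewner_tendsto[OF while_approx_tendsto]) (use while_approx_pred in \<open>auto simp: is_pred_def\<close>)
  ultimately show ?thesis unfolding is_pred_def by (simp add: psd_loewner)
qed

\<comment> \<open>The n-th approximant computes the expected value of Q over runs leaving the loop within n iterations.\<close>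
lemma tr_while_approx:
  assumes "psd Sg UNIV \<rho>"
  shows "tr Sg UNIV (opmult Sg UNIV (opadd (B0 Q) (B1 (while_approx Sg qs B S Q n))) \<rho>) =
    (\<Sum>k\<le>n. tr Sg UNIV (opmult Sg UNIV Q (B0 (((denot Sg S \<circ> B1) ^^ k) \<rho>))))"
proof -
  define P where "P n \<longleftrightarrow> (\<forall>\<rho>. psd Sg UNIV \<rho> \<longrightarrow>
    tr Sg UNIV (opmult Sg UNIV (opadd (B0 Q) (B1 (while_approx Sg qs B S Q n))) \<rho>) =
    (\<Sum>k\<le>n. tr Sg UNIV (opmult Sg UNIV Q (B0 (((denot Sg S \<circ> B1) ^^ k) \<rho>)))))" for n
  have "P n" for n
  proof (induct n)
    case 0
    show ?case unfolding P_def by (simp add: meas_map_def tr_meas_map_dual[OF psd_compl_B compl_B_le_opId, unfolded meas_map_def])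
  next
    case (Suc n)
    let ?A = "opadd (B0 Q) (B1 (while_approx Sg qs B S Q n))"
    have pA: "is_pred Sg ?A" by (rule pred_while_branches[OF q while_approx_pred])
    show ?case unfolding P_def
    proof (intro allI impI)
      fix \<rho> :: "('v,'a) op" assume r: "psd Sg UNIV \<rho>"
      have p1: "psd Sg UNIV (B1 \<rho>)" by (rule psd_meas_map[OF r])
      have "tr Sg UNIV (opmult Sg UNIV (opadd (B0 Q) (B1 (while_approx Sg qs B S Q (Suc n)))) \<rho>) =
          tr Sg UNIV (opmult Sg UNIV Q (B0 \<rho>)) + tr Sg UNIV (opmult Sg UNIV (while_approx Sg qs B S Q (Suc n)) (B1 \<rho>))"
        using tr_meas_map_dual[OF psd_compl_B compl_B_le_opId] tr_meas_map_dual[OF psd_B B_le_opId] by (simp add: opmult_add_left tr_add)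
      also have "tr Sg UNIV (opmult Sg UNIV (while_approx Sg qs B S Q (Suc n)) (B1 \<rho>)) =
          tr Sg UNIV (opmult Sg UNIV ?A ((denot Sg S \<circ> B1) \<rho>))"
        unfolding while_approx_Suc comp_def by (rule wp_sound_dual[OF sS pA p1, symmetric])
      also have "\<dots> = (\<Sum>k\<le>n. tr Sg UNIV (opmult Sg UNIV Q (B0 (((denot Sg S \<circ> B1) ^^ Suc k) \<rho>))))"
        using Suc[unfolded P_def] wp_sound_psd[OF sS p1] by (simp only: funpow_Suc_right comp_def)
      finally show "tr Sg UNIV (opmult Sg UNIV (opadd (B0 Q) (B1 (while_approx Sg qs B S Q (Suc n)))) \<rho>) =
          (\<Sum>k\<le>Suc n. tr Sg UNIV (opmult Sg UNIV Q (B0 (((denot Sg S \<circ> B1) ^^ k) \<rho>))))"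
        by (simp only: sum.atMost_Suc_shift funpow_0)
    qed
  qed
  then show ?thesis using assms unfolding P_def by blast
qed

end

\<comment> \<open>The traces of the summands are bounded by those of the approximants for Q = I, hence by tr rho.\<close>
lemma denot_While_sums:
  assumes r: "psd Sg UNIV \<rho>"
  shows "\<forall>a\<in>basis Sg UNIV. \<forall>b\<in>basis Sg UNIV.
    (\<lambda>k. B0 (((denot Sg S \<circ> B1) ^^ k) \<rho>) a b) sums denot Sg (While qs B S) \<rho> a b"
proof (intro ballI)
  fix a b assume a: "a \<in> basis Sg UNIV" and b: "b \<in> basis Sg UNIV"
  define Y where "Y = (\<lambda>k. B0 (((denot Sg S \<circ> B1) ^^ k) \<rho>))"
  have pY: "psd Sg UNIV (Y k)" for k unfolding Y_def by (intro psd_meas_map psd_loop_iter r)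
  have tb: "(\<Sum>k\<le>n. Re (tr Sg UNIV (Y k))) \<le> Re (tr Sg UNIV \<rho>)" for n
  proof -
    let ?A = "opadd (B0 opId) (B1 (while_approx Sg qs B S opId n))"
    have pA: "is_pred Sg ?A" by (rule pred_while_branches[OF pred_opId while_approx_pred[OF pred_opId]])
    have "(\<Sum>k\<le>n. Re (tr Sg UNIV (Y k))) = Re (tr Sg UNIV (opmult Sg UNIV ?A \<rho>))"
      unfolding tr_while_approx[OF pred_opId r] Y_def tr_cong[OF eq_on_opId_left] by (simp add: Re_sum)
    also have "\<dots> \<le> Re (tr Sg UNIV (opmult Sg UNIV opId \<rho>))"
      by (rule tr_opmult_mono[OF pA pred_opId _ r]) (use pA in \<open>simp add: is_pred_def\<close>)
    also have "\<dots> = Re (tr Sg UNIV \<rho>)" by (simp add: tr_cong[OF eq_on_opId_left])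
    finally show ?thesis .
  qed
  have "summable (\<lambda>k. Re (tr Sg UNIV (Y k)))"
  proof (rule summableI_nonneg_bounded)
    show "0 \<le> Re (tr Sg UNIV (Y k))" for k using psd_tr[OF pY] by blast
    show "(\<Sum>i<n. Re (tr Sg UNIV (Y i))) \<le> Re (tr Sg UNIV \<rho>)" for n
      using tb[of "n - 1"] psd_tr[OF r] by (cases n) (simp_all add: lessThan_Suc_atMost)
  qed
  then have "summable (\<lambda>k. Y k a b)"
    by (rule summable_comparison_test'[where N=0]) (use entry_le_tr[OF pY a b] in simp)
  then show "(\<lambda>k. B0 (((denot Sg S \<circ> B1) ^^ k) \<rho>) a b) sums denot Sg (While qs B S) \<rho> a b"
    unfolding denot.simps Y_def by (simp add: summable_sums)
qed

lemma wp_sound_While: "wp_sound Sg (While qs B S)"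
proof -
  have dual: "tr Sg UNIV (opmult Sg UNIV Q (denot Sg (While qs B S) \<rho>)) =
      tr Sg UNIV (opmult Sg UNIV (wp Sg (While qs B S) Q) \<rho>)" if q: "is_pred Sg Q" and r: "psd Sg UNIV \<rho>" for Q \<rho>
  proof -
    have "(\<lambda>k. tr Sg UNIV (opmult Sg UNIV Q (B0 (((denot Sg S \<circ> B1) ^^ k) \<rho>)))) sums
        tr Sg UNIV (opmult Sg UNIV Q (denot Sg (While qs B S) \<rho>))"
      by (rule tr_opmult_sums[OF denot_While_sums[OF r]])
    moreover have "\<forall>x\<in>basis Sg UNIV. \<forall>y\<in>basis Sg UNIV.
        (\<lambda>n. opadd (B0 Q) (B1 (while_approx Sg qs B S Q n)) x y) \<longlonglongrightarrow> wp Sg (While qs B S) Q x y"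
      unfolding wp_While opadd_def using meas_map_tendsto[OF while_approx_tendsto[OF q]]
      by (auto intro!: tendsto_intros)
    then have "(\<lambda>k. tr Sg UNIV (opmult Sg UNIV Q (B0 (((denot Sg S \<circ> B1) ^^ k) \<rho>)))) sums
        tr Sg UNIV (opmult Sg UNIV (wp Sg (While qs B S) Q) \<rho>)"
      unfolding sums_def_le tr_while_approx[OF q r, symmetric] by (rule tr_opmult_tendsto)
    ultimately show ?thesis by (rule sums_unique2)
  qed
  have "is_pred Sg (wp Sg (While qs B S) Q)" if "is_pred Sg Q" for Q
    unfolding wp_While by (rule pred_while_branches[OF that pred_while_lim[OF that]])
  moreover have "psd Sg UNIV (denot Sg (While qs B S) \<rho>)" if "psd Sg UNIV \<rho>" for \<rho>
    by (rule psd_sums[OF denot_While_sums[OF that]]) (intro psd_meas_map psd_loop_iter that)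
  ultimately show ?thesis unfolding wp_sound_def using dual by blast
qed

end

\<comment> \<open>The induction rule of the nested datatype prog refers to the branches of a Case through snds.\<close>
lemma snds_prod: "Basic_BNFs.snds b = {snd b}" by (cases b) simp

lemma wp_sound_concrete:
  fixes Sg :: "'v::finite \<Rightarrow> 'a::{finite,zero} set"
  assumes z: "\<forall>q. 0 \<in> Sg q"
  shows "concrete S \<Longrightarrow> wf_prog Sg S \<Longrightarrow> wp_sound Sg S"
proof (induct S)
  case Skip show ?case by (rule wp_sound_Skip)
next
  case (Init qs) show ?case by (rule wp_sound_Init[OF z])
next
  case (Unit qs U) then show ?case by (intro wp_sound_Unit) simp
next
  case (Seq S1 S2) then show ?case by (intro wp_sound_Seq) simp_all
next
  case (Repeat N S) then show ?case by (intro wp_sound_Repeat) simp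
next
  case (Case qs bs)
  show ?case
  proof (rule wp_sound_Case)
    show "measurement Sg qs (map fst bs)" using Case.prems by simp
    show "\<forall>b\<in>set bs. wp_sound Sg (snd b)" using Case by (auto simp: snds_prod)
  qed
next
  case (While qs B S) then show ?case by (intro wp_sound_While) simp_all
qed simp

section \<open>Completeness of refinement\<close>


context fixes Sg :: "'v::finite \<Rightarrow> 'a::{finite,zero} set" begin

lemma refines_star_SeqL: "(refines_tot Sg)\<^sup>*\<^sup>* S S' \<Longrightarrow> (refines_tot Sg)\<^sup>*\<^sup>* (Seq S T) (Seq S' T)"
  by (induct rule: rtranclp_induct) (simp, erule rtranclp.rtrancl_into_rtrancl, erule refines_tot.C_seqL)
lemma refines_star_SeqR: "(refines_tot Sg)\<^sup>*\<^sup>* T T' \<Longrightarrow> (refines_tot Sg)\<^sup>*\<^sup>* (Seq S T) (Seq S T')"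
  by (induct rule: rtranclp_induct) (simp, erule rtranclp.rtrancl_into_rtrancl, erule refines_tot.C_seqR)
lemma refines_star_Repeat: "(refines_tot Sg)\<^sup>*\<^sup>* S S' \<Longrightarrow> (refines_tot Sg)\<^sup>*\<^sup>* (Repeat N S) (Repeat N S')"
  by (induct rule: rtranclp_induct) (simp, erule rtranclp.rtrancl_into_rtrancl, erule refines_tot.C_repeat)
lemma refines_star_While: "(refines_tot Sg)\<^sup>*\<^sup>* S S' \<Longrightarrow> (refines_tot Sg)\<^sup>*\<^sup>* (While qs B S) (While qs B S')"
  by (induct rule: rtranclp_induct) (simp, erule rtranclp.rtrancl_into_rtrancl, erule refines_tot.C_while)

lemma refines_star_Case_branch: assumes "(refines_tot Sg)\<^sup>*\<^sup>* S S'" "i < length bs" "snd (bs ! i) = S"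
  shows "(refines_tot Sg)\<^sup>*\<^sup>* (Case qs bs) (Case qs (bs[i := (fst (bs ! i), S')]))"
  using assms(1)
proof (induct rule: rtranclp_induct)
  case base
  have "(fst (bs ! i), S) = bs ! i" using assms(3) by (metis prod.collapse)
  then have "bs[i := (fst (bs ! i), S)] = bs" by simp
  then show ?case by simp
next
  case (step S1 S2)
  let ?bs = "bs[i := (fst (bs ! i), S1)]"
  have li: "i < length ?bs" using assms(2) by simp
  have si: "snd (?bs ! i) = S1" using assms(2) by simp
  have "refines_tot Sg (Case qs ?bs) (Case qs (?bs[i := (fst (?bs ! i), S2)]))"
    by (rule refines_tot.C_case[OF li]) (simp only: si step(2))
  moreover have "?bs[i := (fst (?bs ! i), S2)] = bs[i := (fst (bs ! i), S2)]" using assms(2) by simp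
  ultimately have "refines_tot Sg (Case qs ?bs) (Case qs (bs[i := (fst (bs ! i), S2)]))" by simp
  then show ?case by (rule rtranclp.rtrancl_into_rtrancl[OF step(3)])
qed

lemma refines_star_Case: assumes len: "length cs = length bs" and f: "\<forall>i<length bs. fst (cs ! i) = fst (bs ! i)"
  and r: "\<forall>i<length bs. (refines_tot Sg)\<^sup>*\<^sup>* (snd (cs ! i)) (snd (bs ! i))"
  shows "(refines_tot Sg)\<^sup>*\<^sup>* (Case qs cs) (Case qs bs)"
proof -
  define mix where "mix = (\<lambda>k. map (\<lambda>i. if i < k then bs ! i else cs ! i) [0..<length bs])"
  have m: "k \<le> length bs \<Longrightarrow> (refines_tot Sg)\<^sup>*\<^sup>* (Case qs cs) (Case qs (mix k))" for k
  proof (induct k)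
    case 0
    have "mix 0 = map (\<lambda>i. cs ! i) [0..<length cs]" unfolding mix_def len by simp
    then have "mix 0 = cs" by (simp add: map_nth)
    then show ?case by simp
  next
    case (Suc k)
    then have k: "k < length bs" by simp
    have lm: "length (mix k) = length bs" unfolding mix_def by simp
    have mk: "mix k ! k = cs ! k" unfolding mix_def using k by simp
    have "(refines_tot Sg)\<^sup>*\<^sup>* (Case qs (mix k)) (Case qs ((mix k)[k := (fst (mix k ! k), snd (bs ! k))]))"
      by (rule refines_star_Case_branch) (use r k lm mk in simp_all)
    moreover have "(mix k)[k := (fst (mix k ! k), snd (bs ! k))] = mix (Suc k)"
    proof (rule nth_equalityI)
      show "length ((mix k)[k := (fst (mix k ! k), snd (bs ! k))]) = length (mix (Suc k))"
        unfolding mix_def by simp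
      fix j assume "j < length ((mix k)[k := (fst (mix k ! k), snd (bs ! k))])"
      then have j: "j < length bs" unfolding mix_def by simp
      show "(mix k)[k := (fst (mix k ! k), snd (bs ! k))] ! j = mix (Suc k) ! j"
      proof (cases "j = k")
        case True
        have "(fst (cs ! k), snd (bs ! k)) = bs ! k" using f k by (metis prod.collapse)
        then show ?thesis using True k lm mk unfolding mix_def by simp
      next
        case False
        then show ?thesis using j lm unfolding mix_def by simp
      qed
    qed
    moreover have "(refines_tot Sg)\<^sup>*\<^sup>* (Case qs cs) (Case qs (mix k))" using Suc by simp
    ultimately show ?case by (metis rtranclp_trans)
  qed
  have "mix (length bs) = map (\<lambda>i. bs ! i) [0..<length bs]" unfolding mix_def by (intro map_cong) auto
  then have "mix (length bs) = bs" by (simp add: map_nth)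
  then show ?thesis using m[of "length bs"] by simp
qed

lemma extend_SomeD: "extend F J f l' = Some x \<Longrightarrow> \<exists>l j y. j \<in> J \<and> F l = Some y \<and> x = f l j y"
  unfolding extend_def by (auto split: if_splits)

lemma pred_wp_iter: "wp_sound Sg S \<Longrightarrow> is_pred Sg Q \<Longrightarrow> is_pred Sg ((wp Sg S ^^ m) Q)"
  by (induct m) (auto intro: wp_sound_pred)

end

definition spec_valid :: "('v \<Rightarrow> 'a set) \<Rightarrow> ('v,'a::zero) fam \<Rightarrow> ('v,'a) prog \<Rightarrow> bool" where
  "spec_valid Sg F S \<longleftrightarrow>
     (\<forall>l P Q. F l = Some (P,Q) \<longrightarrow> is_pred Sg P \<and> is_pred Sg Q \<and> loewner Sg UNIV P (wp Sg S Q))"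

lemma spec_validD:
  "spec_valid Sg F S \<Longrightarrow> F l = Some (P,Q) \<Longrightarrow> is_pred Sg P \<and> is_pred Sg Q \<and> loewner Sg UNIV P (wp Sg S Q)"
  unfolding spec_valid_def by blast

context fixes Sg :: "'v::finite \<Rightarrow> 'a::{finite,zero} set" begin

lemma refines_complete_Skip: "spec_valid Sg F Skip \<Longrightarrow> (refines_tot Sg)\<^sup>*\<^sup>* (Hole F) Skip"
  by (rule r_into_rtranclp, rule refines_tot.H_skip) (auto dest: spec_validD)

lemma refines_complete_Init: "spec_valid Sg F (Init qs) \<Longrightarrow> (refines_tot Sg)\<^sup>*\<^sup>* (Hole F) (Init qs)"
  by (rule r_into_rtranclp, rule refines_tot.H_init) (auto dest: spec_validD)

lemma refines_complete_Unit:
  "unitary Sg qs U \<Longrightarrow> spec_valid Sg F (Unit qs U) \<Longrightarrow> (refines_tot Sg)\<^sup>*\<^sup>* (Hole F) (Unit qs U)"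
  by (rule r_into_rtranclp, rule refines_tot.H_unit) (auto dest: spec_validD)

lemma refines_complete_Seq:
  assumes s2: "wp_sound Sg S2" and F: "spec_valid Sg F (Seq S1 S2)"
    and IH1: "\<And>F. spec_valid Sg F S1 \<Longrightarrow> (refines_tot Sg)\<^sup>*\<^sup>* (Hole F) S1"
    and IH2: "\<And>F. spec_valid Sg F S2 \<Longrightarrow> (refines_tot Sg)\<^sup>*\<^sup>* (Hole F) S2"
  shows "(refines_tot Sg)\<^sup>*\<^sup>* (Hole F) (Seq S1 S2)"
proof -
  define R where "R = (\<lambda>l. case F l of Some (P,Q) \<Rightarrow> wp Sg S2 Q | None \<Rightarrow> opzero)"
  have RS: "F l = Some (P,Q) \<Longrightarrow> R l = wp Sg S2 Q" for l P Q unfolding R_def by simp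
  let ?F1 = "\<lambda>l. map_option (\<lambda>(P,Q). (P, R l)) (F l)"
  let ?F2 = "\<lambda>l. map_option (\<lambda>(P,Q). (R l, Q)) (F l)"
  have "refines_tot Sg (Hole F) (Seq (Hole ?F1) (Hole ?F2))"
    by (rule refines_tot.H_seq) (use RS wp_sound_pred[OF s2] spec_validD[OF F] in fastforce)
  moreover have "spec_valid Sg ?F1 S1"
    unfolding spec_valid_def using spec_validD[OF F] wp_sound_pred[OF s2] RS by fastforce
  moreover have "spec_valid Sg ?F2 S2"
    unfolding spec_valid_def using spec_validD[OF F] wp_sound_pred[OF s2] RS by fastforce
  ultimately show ?thesis
    using refines_star_SeqL[OF IH1] refines_star_SeqR[OF IH2] by (meson converse_rtranclp_into_rtranclp rtranclp_trans)
qed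

lemma refines_complete_Repeat:
  assumes s: "wp_sound Sg S" and F: "spec_valid Sg F (Repeat N S)"
    and IH: "\<And>F. spec_valid Sg F S \<Longrightarrow> (refines_tot Sg)\<^sup>*\<^sup>* (Hole F) S"
  shows "(refines_tot Sg)\<^sup>*\<^sup>* (Hole F) (Repeat N S)"
proof -
  define R where "R = (\<lambda>l j. case F l of Some (P,Q) \<Rightarrow> (wp Sg S ^^ (N - j)) Q | None \<Rightarrow> opzero)"
  have RS: "F l = Some (P,Q) \<Longrightarrow> R l j = (wp Sg S ^^ (N - j)) Q" for l j P Q unfolding R_def by simp
  let ?F' = "extend F {0..<N} (\<lambda>l j _. (R l j, R l (Suc j)))"
  have "refines_tot Sg (Hole F) (Repeat N (Hole ?F'))"
  proof (rule refines_tot.H_repeat)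
    show "\<forall>l. l \<in> dom F \<longrightarrow> (\<forall>j\<le>N. is_pred Sg (R l j))"
      using RS pred_wp_iter[OF s] spec_validD[OF F] by fastforce
    show "\<forall>l P Q. F l = Some (P,Q) \<longrightarrow> loewner Sg UNIV P (R l 0) \<and> loewner Sg UNIV (R l N) Q"
      using RS spec_validD[OF F] by simp
  qed
  moreover have "spec_valid Sg ?F' S" unfolding spec_valid_def
  proof (intro allI impI)
    fix l' P' Q' assume "?F' l' = Some (P',Q')"
    then obtain l j P Q where j: "j < N" and F': "F l = Some (P,Q)" and e: "P' = R l j" "Q' = R l (Suc j)"
      by (auto dest!: extend_SomeD)
    have "N - j = Suc (N - Suc j)" using j by simp
    then have "R l j = wp Sg S (R l (Suc j))" unfolding RS[OF F'] by simp
    moreover have "is_pred Sg (R l j)" "is_pred Sg (R l (Suc j))"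
      unfolding RS[OF F'] using pred_wp_iter[OF s] spec_validD[OF F F'] by blast+
    ultimately show "is_pred Sg P' \<and> is_pred Sg Q' \<and> loewner Sg UNIV P' (wp Sg S Q')"
      unfolding e by simp
  qed
  ultimately show ?thesis using refines_star_Repeat[OF IH] by (meson converse_rtranclp_into_rtranclp)
qed

lemma refines_complete_Case:
  assumes m: "measurement Sg qs (map fst bs)" and s: "\<forall>b\<in>set bs. wp_sound Sg (snd b)"
    and F: "spec_valid Sg F (Case qs bs)"
    and IH: "\<And>b F. b \<in> set bs \<Longrightarrow> spec_valid Sg F (snd b) \<Longrightarrow> (refines_tot Sg)\<^sup>*\<^sup>* (Hole F) (snd b)"
  shows "(refines_tot Sg)\<^sup>*\<^sup>* (Hole F) (Case qs bs)"
proof -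
  define Pw where "Pw = (\<lambda>l w. case F l of Some (P,Q) \<Rightarrow> wp Sg (snd (bs ! w)) Q | None \<Rightarrow> opzero)"
  have PS: "F l = Some (P,Q) \<Longrightarrow> Pw l w = wp Sg (snd (bs ! w)) Q" for l w P Q unfolding Pw_def by simp
  have sb: "w < length bs \<Longrightarrow> wp_sound Sg (snd (bs ! w))" for w using s by simp
  let ?Fw = "\<lambda>w l. map_option (\<lambda>(P,Q). (Pw l w, Q)) (F l)"
  let ?cs = "map (\<lambda>w. (map fst bs ! w, Hole (?Fw w))) [0..<length (map fst bs)]"
  have "refines_tot Sg (Hole F) (Case qs ?cs)"
  proof (rule refines_tot.H_case[OF m])
    show "\<forall>l. l \<in> dom F \<longrightarrow> (\<forall>w<length (map fst bs). is_pred Sg (Pw l w))"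
    proof (intro allI impI)
      fix l w assume "l \<in> dom F" "w < length (map fst bs)"
      then obtain P Q where F': "F l = Some (P,Q)" and w: "w < length bs" by auto
      show "is_pred Sg (Pw l w)"
        unfolding PS[OF F'] using wp_sound_pred[OF sb[OF w]] spec_validD[OF F F'] by blast
    qed
    show "\<forall>l P Q. F l = Some (P,Q) \<longrightarrow>
        loewner Sg UNIV P (\<lambda>a b. \<Sum>w<length (map fst bs). meas_map Sg qs (map fst bs ! w) (Pw l w) a b)"
    proof (intro allI impI)
      fix l P Q assume F': "F l = Some (P,Q)"
      have "(\<lambda>a b. \<Sum>w<length (map fst bs). meas_map Sg qs (map fst bs ! w) (Pw l w) a b) = wp Sg (Case qs bs) Q"
        unfolding wp.simps sum_list_as_sum PS[OF F'] by simp
      then show "loewner Sg UNIV P (\<lambda>a b. \<Sum>w<length (map fst bs). meas_map Sg qs (map fst bs ! w) (Pw l w) a b)"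
        using spec_validD[OF F F'] by simp
    qed
  qed
  moreover have "(refines_tot Sg)\<^sup>*\<^sup>* (Case qs ?cs) (Case qs bs)"
  proof (rule refines_star_Case)
    show "\<forall>i<length bs. (refines_tot Sg)\<^sup>*\<^sup>* (snd (?cs ! i)) (snd (bs ! i))"
    proof (intro allI impI)
      fix i assume i: "i < length bs"
      have "spec_valid Sg (?Fw i) (snd (bs ! i))" unfolding spec_valid_def
      proof (intro allI impI)
        fix l P' Q' assume "?Fw i l = Some (P',Q')"
        then obtain P Q where F': "F l = Some (P,Q)" and e: "P' = Pw l i" "Q' = Q" by auto
        show "is_pred Sg P' \<and> is_pred Sg Q' \<and> loewner Sg UNIV P' (wp Sg (snd (bs ! i)) Q')"
          using spec_validD[OF F F'] wp_sound_pred[OF sb[OF i]] unfolding e PS[OF F'] by simp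
      qed
      then show "(refines_tot Sg)\<^sup>*\<^sup>* (snd (?cs ! i)) (snd (bs ! i))" using IH i by simp
    qed
  qed simp_all
  ultimately show ?thesis by (meson converse_rtranclp_into_rtranclp)
qed

lemma refines_complete_While:
  assumes bm: "binmeas Sg qs B" and s: "wp_sound Sg S" and F: "spec_valid Sg F (While qs B S)"
    and IH: "\<And>F. spec_valid Sg F S \<Longrightarrow> (refines_tot Sg)\<^sup>*\<^sup>* (Hole F) S"
  shows "(refines_tot Sg)\<^sup>*\<^sup>* (Hole F) (While qs B S)"
proof -
  define R where "R = (\<lambda>l n. case F l of Some (P,Q) \<Rightarrow> while_approx Sg qs B S Q n | None \<Rightarrow> opzero)"
  have RS: "F l = Some (P,Q) \<Longrightarrow> R l n = while_approx Sg qs B S Q n" for l n P Q unfolding R_def by simp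
  let ?F' = "extend F UNIV (\<lambda>l n (P,Q).
    (R l (Suc n), opadd (meas_map Sg qs (opdiff opId B) Q) (meas_map Sg qs B (R l n))))"
  have "refines_tot Sg (Hole F) (While qs B (Hole ?F'))"
  proof (rule refines_tot.HT_while[OF bm])
    show "\<forall>l. l \<in> dom F \<longrightarrow> (\<forall>n. is_pred Sg (R l n)) \<and> R l 0 = opzero \<and>
        (\<forall>n. loewner Sg UNIV (R l n) (R l (Suc n)))"
    proof (intro allI impI)
      fix l assume "l \<in> dom F"
      then obtain P Q where F': "F l = Some (P,Q)" by auto
      show "(\<forall>n. is_pred Sg (R l n)) \<and> R l 0 = opzero \<and> (\<forall>n. loewner Sg UNIV (R l n) (R l (Suc n)))"
        unfolding RS[OF F'] using spec_validD[OF F F'] while_approx_pred[OF bm s] while_approx_mono[OF bm s]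
        by simp
    qed
    show "\<forall>l P Q. F l = Some (P,Q) \<longrightarrow> (\<exists>Rlim.
        (\<forall>x\<in>basis Sg UNIV. \<forall>y\<in>basis Sg UNIV. (\<lambda>n. R l n x y) \<longlonglongrightarrow> Rlim x y) \<and>
        loewner Sg UNIV P (opadd (meas_map Sg qs (opdiff opId B) Q) (meas_map Sg qs B Rlim)))"
    proof (intro allI impI)
      fix l P Q assume F': "F l = Some (P,Q)"
      show "\<exists>Rlim. (\<forall>x\<in>basis Sg UNIV. \<forall>y\<in>basis Sg UNIV. (\<lambda>n. R l n x y) \<longlonglongrightarrow> Rlim x y) \<and>
          loewner Sg UNIV P (opadd (meas_map Sg qs (opdiff opId B) Q) (meas_map Sg qs B Rlim))"
        using spec_validD[OF F F'] while_approx_tendsto[OF bm s]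
        unfolding RS[OF F'] wp_While by blast
    qed
  qed
  moreover have "spec_valid Sg ?F' S" unfolding spec_valid_def
  proof (intro allI impI)
    fix l' P' Q' assume "?F' l' = Some (P',Q')"
    then obtain l n P Q where F': "F l = Some (P,Q)" and e: "P' = wp Sg S Q'"
      and Q': "Q' = opadd (meas_map Sg qs (opdiff opId B) Q) (meas_map Sg qs B (while_approx Sg qs B S Q n))"
      by (auto dest!: extend_SomeD simp: RS while_approx_Suc)
    have "is_pred Sg Q'"
      unfolding Q' using pred_while_branches[OF bm s] while_approx_pred[OF bm s] spec_validD[OF F F'] by blast
    then show "is_pred Sg P' \<and> is_pred Sg Q' \<and> loewner Sg UNIV P' (wp Sg S Q')"
      unfolding e using wp_sound_pred[OF s] by simp
  qed
  ultimately show ?thesis using refines_star_While[OF IH] by (meson converse_rtranclp_into_rtranclp)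
qed

lemma refines_tot_complete:
  assumes z: "\<forall>q. 0 \<in> Sg q"
  shows "concrete S \<Longrightarrow> wf_prog Sg S \<Longrightarrow> spec_valid Sg F S \<Longrightarrow> (refines_tot Sg)\<^sup>*\<^sup>* (Hole F) S"
proof (induct S arbitrary: F)
  case Skip then show ?case by (simp add: refines_complete_Skip)
next
  case (Init qs) then show ?case by (simp add: refines_complete_Init)
next
  case (Unit qs U) then show ?case by (intro refines_complete_Unit) simp_all
next
  case (Seq S1 S2) then show ?case by (intro refines_complete_Seq wp_sound_concrete[OF z]) simp_all
next
  case (Repeat N S) then show ?case by (intro refines_complete_Repeat wp_sound_concrete[OF z]) simp_all
next
  case (Case qs bs)
  show ?case
  proof (rule refines_complete_Case)
    show "measurement Sg qs (map fst bs)" using Case.prems by simp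
    show "\<forall>b\<in>set bs. wp_sound Sg (snd b)" using Case.prems by (auto intro: wp_sound_concrete[OF z])
    show "(refines_tot Sg)\<^sup>*\<^sup>* (Hole F') (snd b)" if "b \<in> set bs" "spec_valid Sg F' (snd b)" for b F'
      using Case that by (auto simp: snds_prod)
  qed (rule Case.prems)
next
  case (While qs B S) then show ?case by (intro refines_complete_While wp_sound_concrete[OF z]) simp_all
qed simp

lemma loewner_wp_of_hoare_tot:
  assumes s: "wp_sound Sg S" and P: "is_pred Sg P" and Q: "is_pred Sg Q" and h: "hoare_tot Sg P S Q"
  shows "loewner Sg UNIV P (wp Sg S Q)"
proof (rule loewner_of_tr_le)
  show "Im (quadform Sg UNIV P \<psi>) = 0" for \<psi> by (rule Im_quadform_pred[OF P])
  show "Im (quadform Sg UNIV (wp Sg S Q) \<psi>) = 0" for \<psi> by (rule Im_quadform_pred[OF wp_sound_pred[OF s Q]])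
  fix \<rho> assume r: "pstate Sg \<rho>"
  then have p: "psd Sg UNIV \<rho>" unfolding pstate_def by blast
  have "Re (tr Sg UNIV (opmult Sg UNIV P \<rho>)) \<le> Re (tr Sg UNIV (opmult Sg UNIV Q (denot Sg S \<rho>)))"
    using h r unfolding hoare_tot_def trace_tr by blast
  then show "Re (tr Sg UNIV (opmult Sg UNIV P \<rho>)) \<le> Re (tr Sg UNIV (opmult Sg UNIV (wp Sg S Q) \<rho>))"
    unfolding wp_sound_dual[OF s Q p] .
qed

end

theorem mainTheorem4:
  fixes Sg :: "'v::finite \<Rightarrow> 'a::{finite,zero} set"
    and P Q :: "('v,'a) op" and S :: "('v,'a) prog"
  assumes "\<forall>q. 0 \<in> Sg q"
    and "is_pred Sg P" and "is_pred Sg Q"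
    and "concrete S" and "wf_prog Sg S"
    and "hoare_tot Sg P S Q"
  shows "(refines_tot Sg)\<^sup>*\<^sup>* (Hole [[] \<mapsto> (P, Q)]) S"
proof -
  have "wp_sound Sg S" by (rule wp_sound_concrete[OF assms(1,4,5)])
  then have "loewner Sg UNIV P (wp Sg S Q)" using assms(2,3,6) by (rule loewner_wp_of_hoare_tot)
  then have "spec_valid Sg [[] \<mapsto> (P, Q)] S" unfolding spec_valid_def using assms(2,3) by auto
  then show ?thesis by (rule refines_tot_complete[OF assms(1,4,5)])
qed

end
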